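(* In the setting of the context, write near $u=0$ \[ \frac{1}{\Psi(u)}=u+\sum_{k\ge1}\Psi_k\frac{u^{k+1}}{(k+1)!}. \] Then $1/\Psi$ is a Hurwitz series over $\mathbb{Z}[a_1,a_2,a_3,a_4,a_6]$, i.e. each $\Psi_k$ is a polynomial with integer coefficients in \[ a_1=\tfrac{\mu_1}{2},\quad a_2=\wp(v)=\tfrac1{12}(4\mu_2+\mu_1^2),\quad a_3=\wp'(w)=-\mu_3,\quad a_4=\tfrac12g_2,\quad a_6=4\mu_6+\mu_3^2. \]
   Context: Let $\mu_1,\dots,\mu_6\in\mathbb{C}$, $g_2=\frac1{12}(4\mu_2+\mu_1^2)^2-2(\mu_1\mu_3+2\mu_4)$, $g_3=\frac16(\mu_1\mu_3+2\mu_4)(4\mu_2+\mu_1^2)-\frac1{216}(4\mu_2+\mu_1^2)^3-4\mu_6-\mu_3^2$ with $g_2^3-27g_3^2\ne0$; $\wp,\sigma,\zeta$ are the Weierstrass functions with these invariants ($\wp'^2=4\wp^3-g_2\wp-g_3$, $\sigma$ entire odd with $\sigma(u)=u+O(u^5)$, $\zeta=\sigma'/\sigma$). Choose $v,w$ with $\wp(v)=\frac1{12}(4\mu_2+\mu_1^2)$, $\wp'(w)=-\mu_3$, $\wp'(v)\ne0$, and put $\alpha=\wp'(w)/\wp'(v)$. The generalized Baker–Akhiezer function is $\Psi(u)=\frac{\sigma(u+v)^{\frac12(1-\alpha)}\sigma(v-u)^{\frac12(1+\alpha)}}{\sigma(u)\sigma(v)}\exp((-\frac{\mu_1}{2}+\alpha\zeta(v))u)$,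 with branches chosen so that $u\Psi(u)\to1$ as $u\to0$; $1/\Psi$ is the exponential of the general Krichever genus. A Hurwitz series over a ring $A$ is a series $\sum_k\varphi_ku^k/k!$ with all $\varphi_k\in A$. *)

theory Defs
  imports "HOL-Complex_Analysis.Complex_Analysis"
begin

definition wzeta :: "(complex \<Rightarrow> complex) \<Rightarrow> complex \<Rightarrow> complex" where
  "wzeta \<sigma> u = deriv \<sigma> u / \<sigma> u"

definition wp :: "(complex \<Rightarrow> complex) \<Rightarrow> complex \<Rightarrow> complex" where
  "wp \<sigma> u = - deriv (wzeta \<sigma>) u"

text \<open>sigma is the Weierstrass sigma function with invariants g2, g3:
  entire, odd, sigma(u) = u + O(u^5), and wp satisfies wp'^2 = 4 wp^3 - g2 wp - g3.
  These properties determine sigma uniquely.\<close>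
definition weierstrass_sigma :: "complex \<Rightarrow> complex \<Rightarrow> (complex \<Rightarrow> complex) \<Rightarrow> bool" where
  "weierstrass_sigma g2 g3 \<sigma> \<longleftrightarrow>
     \<sigma> holomorphic_on UNIV \<and>
     (\<forall>u. \<sigma> (- u) = - \<sigma> u) \<and>
     (\<exists>C r. r > 0 \<and> (\<forall>u. norm u < r \<longrightarrow> norm (\<sigma> u - u) \<le> C * norm u ^ 5)) \<and>
     (\<forall>u. \<sigma> u \<noteq> 0 \<longrightarrow>
        (deriv (wp \<sigma>) u)^2 = 4 * (wp \<sigma> u)^3 - g2 * wp \<sigma> u - g3)"

definition inv_g2 :: "complex \<Rightarrow> complex \<Rightarrow> complex \<Rightarrow> complex \<Rightarrow> complex" where
  "inv_g2 \<mu>1 \<mu>2 \<mu>3 \<mu>4 = (4*\<mu>2 + \<mu>1^2)^2 / 12 - 2 * (\<mu>1*\<mu>3 + 2*\<mu>4)"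

definition inv_g3 :: "complex \<Rightarrow> complex \<Rightarrow> complex \<Rightarrow> complex \<Rightarrow> complex \<Rightarrow> complex" where
  "inv_g3 \<mu>1 \<mu>2 \<mu>3 \<mu>4 \<mu>6 =
     (\<mu>1*\<mu>3 + 2*\<mu>4) * (4*\<mu>2 + \<mu>1^2) / 6 - (4*\<mu>2 + \<mu>1^2)^3 / 216 - 4*\<mu>6 - \<mu>3^2"

text \<open>The generalized Baker--Akhiezer function, with the branch fixed so that
  u * Psi(u) tends to 1 as u tends to 0 (principal powers of sigma(v+-u)/sigma(v)).\<close>
definition gen_BA :: "(complex \<Rightarrow> complex) \<Rightarrow> complex \<Rightarrow> complex \<Rightarrow> complex \<Rightarrow> complex \<Rightarrow> complex" where
  "gen_BA \<sigma> \<mu>1 v w u =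
     (let \<alpha> = deriv (wp \<sigma>) w / deriv (wp \<sigma>) v in
      (\<sigma> (u + v) / \<sigma> v) powr ((1 - \<alpha>) / 2) * (\<sigma> (v - u) / \<sigma> v) powr ((1 + \<alpha>) / 2)
        / \<sigma> u * exp ((- \<mu>1 / 2 + \<alpha> * wzeta \<sigma> v) * u))"

text \<open>Psi_k: the (k+1)-st derivative at 0 of 1/Psi (which vanishes at 0; note 1/0 = 0).\<close>
definition BA_coeff :: "(complex \<Rightarrow> complex) \<Rightarrow> complex \<Rightarrow> complex \<Rightarrow> complex \<Rightarrow> nat \<Rightarrow> complex" where
  "BA_coeff \<sigma> \<mu>1 v w k = (deriv ^^ (k + 1)) (\<lambda>u. 1 / gen_BA \<sigma> \<mu>1 v w u) 0"

definition zpoly5_eval :: "(nat\<times>nat\<times>nat\<times>nat\<times>nat) set \<Rightarrow> (nat\<times>nat\<times>nat\<times>nat\<times>nat \<Rightarrow> int)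
    \<Rightarrow> complex \<Rightarrow> complex \<Rightarrow> complex \<Rightarrow> complex \<Rightarrow> complex \<Rightarrow> complex" where
  "zpoly5_eval S c x1 x2 x3 x4 x6 =
     (\<Sum>(i,j,l,m,n)\<in>S. of_int (c (i,j,l,m,n)) * x1^i * x2^j * x3^l * x4^m * x6^n)"

end

theory Submission
  imports Defs "HOL-Library.Product_Plus"
begin

text \<open>Write \<open>F = 1/\<Psi> = \<sigma>(u) exp(\<dots>)\<close>. The addition theorem for \<open>\<wp>\<close>, obtained near \<open>u = 0\<close>
  from uniqueness of solutions of \<open>y'' = 6 y\<^sup>2 - g\<^sub>2/2\<close>, turns the logarithmic derivative of \<open>F\<close> into
  \<open>F'/F = a\<^sub>1 - (\<wp>'(u) + a\<^sub>3) / (2 (\<wp>(u) - a\<^sub>2))\<close>. Hence \<open>F\<close>, \<open>S = 1/(F\<^sup>2 (\<wp> - a\<^sub>2))\<close>,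
  \<open>P = a\<^sub>1 F - F'\<close> and the divided powers \<open>D\<^sub>k = F\<^sup>k/k!\<close> satisfy a polynomial ODE system with
  coefficients in \<open>\<int>[a\<^sub>1, a\<^sub>2, a\<^sub>3, a\<^sub>4, a\<^sub>6]\<close> and initial values \<open>D\<^sub>k(0) = 0\<close> (\<open>k \<ge> 1\<close>), \<open>S(0) = 1\<close>,
  \<open>P(0) = -1\<close>; the divided powers are needed because \<open>P'\<close> contains \<open>F\<^sup>5\<close> with the non-integral
  coefficient \<open>-90 (a\<^sub>6 - a\<^sub>3\<^sup>2) / 5!\<close>. Induction on the order of differentiation then shows that all
  Taylor coefficients at \<open>0\<close> of the solution are integral polynomials in the \<open>a\<^sub>i\<close>, uniformly in
  the parameters.\<close>

section \<open>Integer polynomial functions\<close>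

inductive_set int_alg :: "('a \<Rightarrow> 'b::comm_ring_1) set \<Rightarrow> ('a \<Rightarrow> 'b) set" for X
where
  generator: "f \<in> X \<Longrightarrow> f \<in> int_alg X"
| of_int: "(\<lambda>_. of_int k) \<in> int_alg X"
| add: "f \<in> int_alg X \<Longrightarrow> g \<in> int_alg X \<Longrightarrow> (\<lambda>x. f x + g x) \<in> int_alg X"
| mult: "f \<in> int_alg X \<Longrightarrow> g \<in> int_alg X \<Longrightarrow> (\<lambda>x. f x * g x) \<in> int_alg X"

lemma int_alg_of_nat: "(\<lambda>_. of_nat k) \<in> int_alg X"
  using int_alg.of_int[of "int k"] by simp

lemma int_alg_const_mult: "f \<in> int_alg X \<Longrightarrow> (\<lambda>x. of_int k * f x) \<in> int_alg X"
  by (rule int_alg.mult[OF int_alg.of_int])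

lemma int_alg_diff: "f \<in> int_alg X \<Longrightarrow> g \<in> int_alg X \<Longrightarrow> (\<lambda>x. f x - g x) \<in> int_alg X"
  using int_alg.add[OF _ int_alg_const_mult[of g X "-1"]] by simp

lemma int_alg_sum:
  "finite A \<Longrightarrow> (\<And>i. i \<in> A \<Longrightarrow> f i \<in> int_alg X) \<Longrightarrow> (\<lambda>x. \<Sum>i\<in>A. f i x) \<in> int_alg X"
  by (induction A rule: finite_induct) (use int_alg.of_int[of 0] in \<open>auto intro: int_alg.add\<close>)

lemma int_alg_numeral: "(\<lambda>_. numeral n) \<in> int_alg X" "(\<lambda>_. - numeral n) \<in> int_alg X"
  using int_alg.of_int[of "numeral n"] int_alg.of_int[of "- numeral n"] by simp_all

lemma int_alg_zero: "(\<lambda>_. 0) \<in> int_alg X"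
  using int_alg.of_int[of 0] by simp

definition int_combination :: "('e \<Rightarrow> 'a \<Rightarrow> 'b::comm_ring_1) \<Rightarrow> ('a \<Rightarrow> 'b) \<Rightarrow> bool" where
  "int_combination mon p \<longleftrightarrow> (\<exists>S c. finite S \<and> (\<forall>x. p x = (\<Sum>e\<in>S. of_int (c e) * mon e x)))"

lemma int_combination_add:
  assumes "int_combination mon p" "int_combination mon q"
  shows "int_combination mon (\<lambda>x. p x + q x)"
proof -
  obtain S1 c1 where S1: "finite S1" "\<And>x. p x = (\<Sum>e\<in>S1. of_int (c1 e) * mon e x)"
    using assms(1) unfolding int_combination_def by blast
  obtain S2 c2 where S2: "finite S2" "\<And>x. q x = (\<Sum>e\<in>S2. of_int (c2 e) * mon e x)"
    using assms(2) unfolding int_combination_def by blast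
  define c where "c e = (if e \<in> S1 then c1 e else 0) + (if e \<in> S2 then c2 e else 0)" for e
  have restrict: "(\<Sum>e\<in>S. of_int (d e) * mon e x)
      = (\<Sum>e\<in>S1 \<union> S2. of_int (if e \<in> S then d e else 0) * mon e x)"
    if "S \<subseteq> S1 \<union> S2" for S d x
    using that S1(1) S2(1) by (intro sum.mono_neutral_cong_left) auto
  have "p x + q x = (\<Sum>e\<in>S1 \<union> S2. of_int (c e) * mon e x)" for x
    using restrict[of S1 c1 x] restrict[of S2 c2 x]
    by (simp add: S1(2) S2(2) c_def sum.distrib[symmetric] distrib_right)
  with S1(1) S2(1) show ?thesis
    unfolding int_combination_def by blast
qed

lemma int_combination_mult:
  fixes mon :: "'e::comm_monoid_add \<Rightarrow> 'a \<Rightarrow> 'b::comm_ring_1"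
  assumes mon_add: "\<And>e e' x. mon (e + e') x = mon e x * mon e' x"
    and "int_combination mon p" "int_combination mon q"
  shows "int_combination mon (\<lambda>x. p x * q x)"
proof -
  obtain S1 c1 where S1: "finite S1" "\<And>x. p x = (\<Sum>e\<in>S1. of_int (c1 e) * mon e x)"
    using assms(2) unfolding int_combination_def by blast
  obtain S2 c2 where S2: "finite S2" "\<And>x. q x = (\<Sum>e\<in>S2. of_int (c2 e) * mon e x)"
    using assms(3) unfolding int_combination_def by blast
  define T where "T = (\<lambda>x. fst x + snd x) ` (S1 \<times> S2)"
  define c where "c t = (\<Sum>x\<in>{x \<in> S1 \<times> S2. fst x + snd x = t}. c1 (fst x) * c2 (snd x))" for t
  have "p x * q x = (\<Sum>t\<in>T. of_int (c t) * mon t x)" for x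
  proof -
    define h where "h y = of_int (c1 (fst y) * c2 (snd y)) * mon (fst y + snd y) x" for y
    have "p x * q x = (\<Sum>e1\<in>S1. \<Sum>e2\<in>S2. h (e1, e2))"
      unfolding S1(2) S2(2) sum_product h_def by (simp add: mon_add mult_ac)
    also have "\<dots> = (\<Sum>y\<in>S1 \<times> S2. h y)"
      by (simp add: sum.cartesian_product split_beta)
    also have "\<dots> = (\<Sum>t\<in>T. \<Sum>y\<in>{y \<in> S1 \<times> S2. fst y + snd y = t}. h y)"
      by (rule sum.group[symmetric]) (use S1(1) S2(1) in \<open>auto simp: T_def\<close>)
    also have "\<dots> = (\<Sum>t\<in>T. of_int (c t) * mon t x)"
      unfolding c_def h_def of_int_sum sum_distrib_right by (intro sum.cong refl) auto
    finally show ?thesis .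
  qed
  moreover have "finite T" using S1(1) S2(1) by (simp add: T_def)
  ultimately show ?thesis unfolding int_combination_def by blast
qed

lemma int_alg_imp_int_combination:
  fixes mon :: "'e::comm_monoid_add \<Rightarrow> 'a \<Rightarrow> 'b::comm_ring_1"
  assumes mon_add: "\<And>e e' x. mon (e + e') x = mon e x * mon e' x"
    and mon_0: "\<And>x. mon 0 x = 1"
    and generators: "\<And>f. f \<in> X \<Longrightarrow> \<exists>e. f = mon e"
    and "p \<in> int_alg X"
  shows "int_combination mon p"
  using \<open>p \<in> int_alg X\<close>
proof induction
  case (generator f)
  then obtain e where "f = mon e" using generators by blast
  then show ?case
    unfolding int_combination_def by (intro exI[of _ "{e}"] exI[of _ "\<lambda>_. 1"]) simp
next
  case (of_int k)
  show ?case
    unfolding int_combination_def by (intro exI[of _ "{0}"] exI[of _ "\<lambda>_. k"]) (simp add: mon_0)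
qed (auto intro: int_combination_add int_combination_mult[OF mon_add])

lemma int_alg_zpoly5_eval:
  assumes "p \<in> int_alg {x1, x2, x3, x4, x6}"
  shows "\<exists>S c. finite S \<and> (\<forall>y. p y = zpoly5_eval S c (x1 y) (x2 y) (x3 y) (x4 y) (x6 y))"
proof -
  define mon :: "nat \<times> nat \<times> nat \<times> nat \<times> nat \<Rightarrow> 'a \<Rightarrow> complex" where
    "mon = (\<lambda>(i, j, l, m, n) y. x1 y ^ i * x2 y ^ j * x3 y ^ l * x4 y ^ m * x6 y ^ n)"
  have "int_combination mon p"
  proof (rule int_alg_imp_int_combination[OF _ _ _ assms])
    have "x1 = mon (1,0,0,0,0)" "x2 = mon (0,1,0,0,0)" "x3 = mon (0,0,1,0,0)"
      "x4 = mon (0,0,0,1,0)" "x6 = mon (0,0,0,0,1)"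
      by (simp_all add: mon_def fun_eq_iff)
    then show "f \<in> {x1, x2, x3, x4, x6} \<Longrightarrow> \<exists>e. f = mon e" for f
      by blast
  qed (auto simp: mon_def power_add zero_prod_def split: prod.splits)
  then show ?thesis
    unfolding int_combination_def zpoly5_eval_def mon_def by (simp add: split_beta mult.assoc)
qed

section \<open>Taylor coefficients of polynomial ODE systems\<close>

lemma eventually_nhds_eq_if_isCont:
  fixes f g :: "'a::{perfect_space, t2_space} \<Rightarrow> 'b::t2_space"
  assumes "isCont f z" "isCont g z" "\<forall>\<^sub>F x in at z. f x = g x"
  shows "\<forall>\<^sub>F x in nhds z. f x = g x"
proof -
  have "(g \<longlongrightarrow> f z) (at z)"
    using assms(1,3) unfolding isCont_def by (rule Lim_transform_eventually)
  with assms(2) have "f z = g z"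
    unfolding isCont_def using tendsto_unique[OF at_neq_bot] by blast
  with assms(3) show ?thesis
    by (simp add: eventually_nhds_conv_at)
qed

definition jets_in :: "('i \<Rightarrow> complex) set \<Rightarrow> 'i set \<Rightarrow> nat \<Rightarrow> ('i \<Rightarrow> complex \<Rightarrow> complex) \<Rightarrow> bool" where
  "jets_in R I n f \<longleftrightarrow> (\<forall>\<iota>\<in>I. f \<iota> analytic_on {0}) \<and> (\<forall>m\<le>n. \<exists>p\<in>R. \<forall>\<iota>\<in>I. (deriv ^^ m) (f \<iota>) 0 = p \<iota>)"

lemma jets_in_const:
  assumes "p \<in> int_alg X"
  shows "jets_in (int_alg X) I n (\<lambda>\<iota> _. p \<iota>)"
  unfolding jets_in_def
proof (intro conjI ballI allI impI)
  fix m :: nat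
  show "\<exists>q\<in>int_alg X. \<forall>\<iota>\<in>I. (deriv ^^ m) (\<lambda>_. p \<iota>) 0 = q \<iota>"
    using assms int_alg.of_int[of 0 X] by (cases m) (auto simp: higher_deriv_const)
qed (auto intro: analytic_intros)

lemma jets_in_add:
  assumes "jets_in (int_alg X) I n f" "jets_in (int_alg X) I n g"
  shows "jets_in (int_alg X) I n (\<lambda>\<iota> z. f \<iota> z + g \<iota> z)"
  unfolding jets_in_def
proof (intro conjI ballI allI impI)
  fix m assume "m \<le> n"
  then obtain p q where "p \<in> int_alg X" "\<forall>\<iota>\<in>I. (deriv ^^ m) (f \<iota>) 0 = p \<iota>"
    "q \<in> int_alg X" "\<forall>\<iota>\<in>I. (deriv ^^ m) (g \<iota>) 0 = q \<iota>"
    using assms unfolding jets_in_def by blast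
  with assms show "\<exists>r\<in>int_alg X. \<forall>\<iota>\<in>I. (deriv ^^ m) (\<lambda>z. f \<iota> z + g \<iota> z) 0 = r \<iota>"
    unfolding jets_in_def by (auto simp: higher_deriv_add_at intro!: bexI[OF _ int_alg.add])
qed (use assms in \<open>auto simp: jets_in_def intro: analytic_intros\<close>)

lemma jets_in_mult:
  assumes f: "jets_in (int_alg X) I n f" and g: "jets_in (int_alg X) I n g"
  shows "jets_in (int_alg X) I n (\<lambda>\<iota> z. f \<iota> z * g \<iota> z)"
proof -
  obtain p where p: "\<And>m. m \<le> n \<Longrightarrow> p m \<in> int_alg X \<and> (\<forall>\<iota>\<in>I. (deriv ^^ m) (f \<iota>) 0 = p m \<iota>)"
    using f unfolding jets_in_def by metis
  obtain q where q: "\<And>m. m \<le> n \<Longrightarrow> q m \<in> int_alg X \<and> (\<forall>\<iota>\<in>I. (deriv ^^ m) (g \<iota>) 0 = q m \<iota>)"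
    using g unfolding jets_in_def by metis
  have "\<exists>r\<in>int_alg X. \<forall>\<iota>\<in>I. (deriv ^^ m) (\<lambda>z. f \<iota> z * g \<iota> z) 0 = r \<iota>" if "m \<le> n" for m
  proof
    show "(\<lambda>\<iota>. \<Sum>i = 0..m. of_nat (m choose i) * p i \<iota> * q (m - i) \<iota>) \<in> int_alg X"
      using that p q by (intro int_alg_sum int_alg.mult int_alg_of_nat) auto
    show "\<forall>\<iota>\<in>I. (deriv ^^ m) (\<lambda>z. f \<iota> z * g \<iota> z) 0 = (\<Sum>i = 0..m. of_nat (m choose i) * p i \<iota> * q (m - i) \<iota>)"
      using f g p q that by (auto simp: jets_in_def higher_deriv_mult_at intro!: sum.cong)
  qed
  with f g show ?thesis
    unfolding jets_in_def by (auto intro: analytic_intros)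
qed

lemma jets_in_diff:
  assumes "jets_in (int_alg X) I n f" "jets_in (int_alg X) I n g"
  shows "jets_in (int_alg X) I n (\<lambda>\<iota> z. f \<iota> z - g \<iota> z)"
  using jets_in_add[OF assms(1) jets_in_mult[OF jets_in_const[OF int_alg.of_int[of "-1"]] assms(2)]]
  by simp

lemma jets_in_ode:
  fixes Y \<Phi> :: "'i \<Rightarrow> 'k \<Rightarrow> complex \<Rightarrow> complex"
  assumes initial: "\<And>k. jets_in R I 0 (\<lambda>\<iota>. Y \<iota> k)"
    and ode: "\<And>\<iota> k. \<iota> \<in> I \<Longrightarrow> \<forall>\<^sub>F z in at 0. deriv (Y \<iota> k) z = \<Phi> \<iota> k z"
    and rhs: "\<And>n k. (\<And>j. jets_in R I n (\<lambda>\<iota>. Y \<iota> j)) \<Longrightarrow> jets_in R I n (\<lambda>\<iota>. \<Phi> \<iota> k)"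
  shows "jets_in R I n (\<lambda>\<iota>. Y \<iota> k)"
proof (induction n arbitrary: k)
  case 0 show ?case by (rule initial)
next
  case (Suc n)
  have \<Phi>: "jets_in R I n (\<lambda>\<iota>. \<Phi> \<iota> k)"
    by (rule rhs[OF Suc.IH])
  then obtain p where p: "p \<in> R" "\<forall>\<iota>\<in>I. (deriv ^^ n) (\<Phi> \<iota> k) 0 = p \<iota>"
    unfolding jets_in_def by blast
  have "(deriv ^^ Suc n) (Y \<iota> k) 0 = p \<iota>" if "\<iota> \<in> I" for \<iota>
  proof -
    have "Y \<iota> k analytic_on {0}" "\<Phi> \<iota> k analytic_on {0}"
      using initial \<Phi> that unfolding jets_in_def by blast+
    then have "\<forall>\<^sub>F z in nhds 0. deriv (Y \<iota> k) z = \<Phi> \<iota> k z"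
      by (intro eventually_nhds_eq_if_isCont ode that analytic_at_imp_isCont analytic_intros)
    then have "(deriv ^^ n) (deriv (Y \<iota> k)) 0 = (deriv ^^ n) (\<Phi> \<iota> k) 0"
      by (rule higher_deriv_cong_ev[OF _ refl])
    then show ?thesis
      using p that by (simp add: funpow_Suc_right del: funpow.simps)
  qed
  with p Suc.IH[of k] show ?case
    unfolding jets_in_def by (auto simp: le_Suc_eq)
qed

lemma holomorphic_factor_power:
  fixes f :: "complex \<Rightarrow> complex"
  assumes "f holomorphic_on UNIV" "r > 0" "\<And>z. norm z < r \<Longrightarrow> norm (f z) \<le> C * norm z ^ n"
  shows "\<exists>h. h holomorphic_on UNIV \<and> (\<forall>z. f z = z ^ n * h z)"
  using assms(1,3)
proof (induction n arbitrary: f)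
  case 0
  then show ?case by auto
next
  case (Suc n)
  have "norm (f 0) \<le> 0"
    using Suc.prems(2)[of 0] \<open>r > 0\<close> by simp
  then have f0: "f 0 = 0" by simp
  define \<psi> where "\<psi> = (\<lambda>z. if z = 0 then deriv f 0 else (f z - f 0) / (z - 0))"
  have \<psi>: "\<psi> holomorphic_on UNIV"
    unfolding \<psi>_def by (rule pole_lemma[OF Suc.prems(1)]) simp
  have f_eq: "f z = z * \<psi> z" for z
    by (cases "z = 0") (auto simp: \<psi>_def f0)
  have bound: "norm (\<psi> z) \<le> C * norm z ^ n" if "z \<noteq> 0" "norm z < r" for z
  proof -
    have "norm z * norm (\<psi> z) \<le> norm z * (C * norm z ^ n)"
      using Suc.prems(2)[OF that(2)] by (simp add: f_eq norm_mult algebra_simps)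
    then show ?thesis using that(1) by simp
  qed
  have "norm (\<psi> 0) \<le> C * norm (0::complex) ^ n"
  proof (rule tendsto_le[OF at_neq_bot])
    show "((\<lambda>z. norm (\<psi> z)) \<longlongrightarrow> norm (\<psi> 0)) (at 0)"
      using \<psi> by (intro tendsto_intros)
        (meson UNIV_I continuous_on_eq_continuous_at holomorphic_on_imp_continuous_on open_UNIV isCont_def)
    show "((\<lambda>z::complex. C * norm z ^ n) \<longlongrightarrow> C * norm (0::complex) ^ n) (at 0)"
      by (intro tendsto_intros)
    show "\<forall>\<^sub>F z in at 0. norm (\<psi> z) \<le> C * norm z ^ n"
      using \<open>r > 0\<close> by (auto simp: eventually_at dist_norm intro!: exI[of _ r] bound)
  qed
  then have "norm z < r \<Longrightarrow> norm (\<psi> z) \<le> C * norm z ^ n" for z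
    by (cases "z = 0") (auto intro: bound)
  then obtain h where "h holomorphic_on UNIV" "\<forall>z. \<psi> z = z ^ n * h z"
    using Suc.IH[OF \<psi>] by blast
  then show ?case by (auto simp: f_eq)
qed

lemma eventually_deriv_cong_at:
  fixes f g :: "complex \<Rightarrow> complex"
  assumes "\<forall>\<^sub>F x in at z. f x = g x"
  shows "\<forall>\<^sub>F x in at z. deriv f x = deriv g x"
proof -
  obtain S where S: "open S" "z \<in> S" "\<And>x. x \<in> S \<Longrightarrow> x \<noteq> z \<Longrightarrow> f x = g x"
    using assms unfolding eventually_at_topological by blast
  have "deriv f x = deriv g x" if "x \<in> S - {z}" for x
    by (rule deriv_cong_ev) (use S that in \<open>auto simp: eventually_nhds intro!: exI[of _ "S - {z}"]\<close>)
  with S show ?thesis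
    unfolding eventually_at_topological by blast
qed

lemma eventually_constant_if_deriv_zero:
  fixes T L :: "complex \<Rightarrow> complex"
  assumes "T analytic_on {z}" and "\<forall>\<^sub>F u in at z. T u = L u \<and> (L has_field_derivative 0) (at u)"
  shows "\<forall>\<^sub>F u in at z. L u = T z"
proof -
  obtain \<rho>1 where "\<rho>1 > 0" "T holomorphic_on ball z \<rho>1"
    using assms(1) analytic_at_ball by blast
  moreover obtain \<rho>2 where "\<rho>2 > 0"
    and \<rho>2: "\<And>x. x \<noteq> z \<Longrightarrow> dist x z < \<rho>2 \<Longrightarrow> T x = L x \<and> (L has_field_derivative 0) (at x)"
    using assms(2) unfolding eventually_at by blast
  define \<rho> where "\<rho> = min \<rho>1 \<rho>2"
  ultimately have \<rho>: "\<rho> > 0" "T holomorphic_on ball z \<rho>"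
    "\<And>x. x \<in> ball z \<rho> - {z} \<Longrightarrow> T x = L x \<and> (L has_field_derivative 0) (at x)"
    using \<rho>2 \<open>\<rho>2 > 0\<close> by (auto simp: \<rho>_def dist_commute intro: holomorphic_on_subset)
  have "(T has_field_derivative 0) (at x)" if "x \<in> ball z \<rho> - {z}" for x
    using has_field_derivative_transform_within_open[of L 0 x "ball z \<rho> - {z}" T] \<rho>(3) that
    by (auto simp: open_Diff)
  then obtain k where k: "\<And>x. x \<in> ball z \<rho> \<Longrightarrow> T x = k"
    using DERIV_zero_connected_constant[of "ball z \<rho>" "{z}" T] \<rho>(2)
    by (auto intro: holomorphic_on_imp_continuous_on)
  have "\<forall>\<^sub>F u in at z. u \<in> ball z \<rho>"
    using eventually_at_ball[OF \<rho>(1), of z UNIV] by simp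
  with assms(2) show ?thesis
  proof eventually_elim
    case (elim u)
    then show ?case
      using k[of u] k[of z] \<rho>(1) by simp
  qed
qed

lemma second_order_ode_unique:
  fixes F G :: "complex \<Rightarrow> complex"
  assumes S: "open S" "connected S" "c \<in> S" "z \<in> S"
    and holo: "F holomorphic_on S" "G holomorphic_on S"
    and ode: "\<And>z. z \<in> S \<Longrightarrow> deriv (deriv F) z = a * (F z)^2 - b"
      "\<And>z. z \<in> S \<Longrightarrow> deriv (deriv G) z = a * (G z)^2 - b"
    and initial: "F c = G c" "deriv F c = deriv G c"
  shows "F z = G z"
proof -
  have recursion: "(deriv ^^ Suc (Suc m)) H c
      = a * (\<Sum>i=0..m. of_nat (m choose i) * (deriv ^^ i) H c * (deriv ^^ (m - i)) H c)
        - (if m = 0 then b else 0)"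
    if H: "H holomorphic_on S" and H_ode: "\<And>z. z \<in> S \<Longrightarrow> deriv (deriv H) z = a * (H z)^2 - b"
    for H m
  proof -
    have "(deriv ^^ Suc (Suc m)) H c = (deriv ^^ m) (deriv (deriv H)) c"
      by (simp add: funpow_Suc_right del: funpow.simps)
    also have "\<dots> = (deriv ^^ m) (\<lambda>z. a * (H z * H z) - b) c"
      by (rule higher_deriv_cong_ev[OF _ refl])
        (use S H_ode in \<open>auto simp: eventually_nhds power2_eq_square\<close>)
    also have "\<dots> = (deriv ^^ m) (\<lambda>z. a * (H z * H z)) c - (deriv ^^ m) (\<lambda>z. b) c"
      by (rule higher_deriv_diff) (use S H in \<open>auto intro!: holomorphic_intros\<close>)
    also have "(deriv ^^ m) (\<lambda>z. a * (H z * H z)) c = a * (deriv ^^ m) (\<lambda>z. H z * H z) c"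
      by (rule higher_deriv_cmult) (use S H in \<open>auto intro!: holomorphic_intros\<close>)
    also have "(deriv ^^ m) (\<lambda>z. H z * H z) c
        = (\<Sum>i=0..m. of_nat (m choose i) * (deriv ^^ i) H c * (deriv ^^ (m - i)) H c)"
      by (rule higher_deriv_mult[OF H H S(1) S(3)])
    finally show ?thesis by (simp add: higher_deriv_const)
  qed
  have "(deriv ^^ n) F c = (deriv ^^ n) G c" for n
  proof (induction n rule: nat_less_induct)
    case (1 n)
    consider "n = 0" | "n = 1" | m where "n = Suc (Suc m)"
      by (metis One_nat_def not0_implies_Suc)
    then show ?case
    proof cases
      case 3
      with "1" have "(deriv ^^ i) F c = (deriv ^^ i) G c" if "i \<le> m" for i
        using that by simp
      with 3 show ?thesis
        using recursion[OF holo(1) ode(1), of m] recursion[OF holo(2) ode(2), of m]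
        by (simp add: diff_le_self)
    qed (use initial in simp_all)
  qed
  then show ?thesis
    using holomorphic_fun_eq_on_connected[OF holo S(1,2) _ S(3,4)] by blast
qed

lemma has_field_derivative_square_div_square:
  fixes A X :: "complex \<Rightarrow> complex"
  assumes "(A has_field_derivative A') (at x)" "(X has_field_derivative X') (at x)" "X x \<noteq> 0"
  shows "((\<lambda>x. (A x)^2 / (4 * (X x)^2)) has_field_derivative
           A x * (A' * X x - A x * X') / (2 * (X x)^3)) (at x)"
  using assms by (auto intro!: derivative_eq_intros simp: field_simps power2_eq_square power3_eq_cube)

lemma has_field_derivative_mult_div_cube:
  fixes A T X :: "complex \<Rightarrow> complex"
  assumes "(A has_field_derivative A') (at x)" "(T has_field_derivative T') (at x)"
    "(X has_field_derivative X') (at x)" "X x \<noteq> 0"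
  shows "((\<lambda>x. A x * T x / (2 * (X x)^3)) has_field_derivative
           (A' * T x + A x * T') / (2 * (X x)^3) - 3 * (A x * T x) * X' / (2 * (X x)^4)) (at x)"
  using assms
  by (auto intro!: derivative_eq_intros simp: field_simps power2_eq_square power3_eq_cube eval_nat_numeral)

lemma has_field_derivative_div_double:
  fixes A X :: "complex \<Rightarrow> complex"
  assumes "(A has_field_derivative A') (at x)" "(X has_field_derivative X') (at x)" "X x \<noteq> 0"
  shows "((\<lambda>x. A x / (2 * X x)) has_field_derivative (A' * X x - A x * X') / (2 * (X x)^2)) (at x)"
  using assms by (auto intro!: derivative_eq_intros simp: field_simps power2_eq_square)

lemma has_field_derivative_inverse_square_mult:
  fixes A X :: "complex \<Rightarrow> complex"
  assumes "(A has_field_derivative A') (at x)" "(X has_field_derivative X') (at x)" "A x \<noteq> 0" "X x \<noteq> 0"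
  shows "((\<lambda>x. 1 / ((A x)^2 * X x)) has_field_derivative
           - (2 * A x * A' * X x + (A x)^2 * X') / ((A x)^2 * X x)^2) (at x)"
  using assms by (auto intro!: derivative_eq_intros simp: field_simps power2_eq_square)

lemma wp_addition_rhs_ode_algebra:
  fixes X Y P0 Q0 g2 g3 :: complex
  assumes "X \<noteq> 0" and "Y^2 = 4 * (X + P0)^3 - g2 * (X + P0) - g3" and "Q0^2 = 4 * P0^3 - g2 * P0 - g3"
  defines "W \<equiv> 6 * (X + P0)^2 - g2 / 2"
  defines "T \<equiv> W * X - (Y - Q0) * Y"
  shows "(W * T + (Y - Q0) * (12 * (X + P0) * Y * X - (Y - Q0) * W)) / (2 * X^3)
      - 3 * ((Y - Q0) * T) * Y / (2 * X^4) - W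
    = 6 * ((Y - Q0)^2 / (4 * X^2) - (X + P0) - P0)^2 - g2 / 2"
proof -
  have "4 * X * (W * T + (Y - Q0) * (12 * (X + P0) * Y * X - (Y - Q0) * W))
      - 12 * ((Y - Q0) * T) * Y - 8 * X^4 * W
    = 3 * ((Y - Q0)^2 - 4 * X^2 * (X + 2 * P0))^2 - 4 * g2 * X^4"
    using assms(2,3) unfolding W_def T_def by algebra
  moreover have "(W * T + (Y - Q0) * (12 * (X + P0) * Y * X - (Y - Q0) * W)) / (2 * X^3)
      - 3 * ((Y - Q0) * T) * Y / (2 * X^4) - W
    = (4 * X * (W * T + (Y - Q0) * (12 * (X + P0) * Y * X - (Y - Q0) * W))
      - 12 * ((Y - Q0) * T) * Y - 8 * X^4 * W) / (8 * X^4)"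
    using assms(1) by (simp add: field_simps eval_nat_numeral)
  moreover have "6 * ((Y - Q0)^2 / (4 * X^2) - (X + P0) - P0)^2 - g2 / 2
    = (3 * ((Y - Q0)^2 - 4 * X^2 * (X + 2 * P0))^2 - 4 * g2 * X^4) / (8 * X^4)"
    using assms(1) by (simp add: field_simps eval_nat_numeral)
  ultimately show ?thesis
    by simp
qed

lemma log_derivative_identity_algebra:
  fixes P Y Q a2 g2 g3 \<alpha> :: complex
  assumes "P \<noteq> a2" and "Y^2 = 4 * P^3 - g2 * P - g3" and "Q^2 = 4 * a2^3 - g2 * a2 - g3"
  shows "- P + (1 - \<alpha>) / 2 * ((Y - Q)^2 / (4 * (P - a2)^2) - P - a2)
      + (1 + \<alpha>) / 2 * ((Y + Q)^2 / (4 * (P - a2)^2) - P - a2)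
      + ((6 * P^2 - g2 / 2) * (P - a2) - (Y + \<alpha> * Q) * Y) / (2 * (P - a2)^2) = 0"
proof -
  define X where "X = P - a2"
  have P: "P = X + a2" and "X \<noteq> 0"
    using assms(1) by (simp_all add: X_def)
  have "Q^2 - Y^2 + 2 * (6 * (X + a2)^2 - g2 / 2) * X - 4 * X^2 * (2 * (X + a2) + a2) = 0"
    using assms(2,3) unfolding P by algebra
  moreover have "- P + (1 - \<alpha>) / 2 * ((Y - Q)^2 / (4 * (P - a2)^2) - P - a2)
      + (1 + \<alpha>) / 2 * ((Y + Q)^2 / (4 * (P - a2)^2) - P - a2)
      + ((6 * P^2 - g2 / 2) * (P - a2) - (Y + \<alpha> * Q) * Y) / (2 * (P - a2)^2)
    = (Q^2 - Y^2 + 2 * (6 * (X + a2)^2 - g2 / 2) * X - 4 * X^2 * (2 * (X + a2) + a2)) / (4 * X^2)"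
    unfolding P using \<open>X \<noteq> 0\<close>
    by (simp add: field_simps) (simp add: algebra_simps power2_eq_square power3_eq_cube)
  ultimately show ?thesis by simp
qed

lemma S_derivative_algebra:
  fixes F X Y a1 a3 :: complex
  assumes "X \<noteq> 0" "F \<noteq> 0"
  defines "S \<equiv> 1 / (F^2 * X)"
  shows "- (2 * F * (F * (a1 - (Y + a3) / (2 * X))) * X + F^2 * Y) / (F^2 * X)^2
     = -2 * a1 * S + a3 * (F * F * S * S)"
  using assms by (simp add: field_simps power2_eq_square)

lemma P_derivative_algebra:
  fixes F P Y a1 a2 a3 a6 g2 :: complex
  assumes "P \<noteq> a2" "F \<noteq> 0" and curve: "Y^2 = 4 * P^3 - g2 * P - (4 * a2^3 - g2 * a2 - a6)"
  defines "S \<equiv> 1 / (F^2 * (P - a2))" and "Q \<equiv> F * ((Y + a3) / (2 * (P - a2)))"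
  shows "F * (a1 - (Y + a3) / (2 * (P - a2))) * ((Y + a3) / (2 * (P - a2)))
       + ((6 * P^2 - g2 / 2) * (P - a2) - (Y + a3) * Y) / (2 * (P - a2)^2) * F
     = a1 * Q - 2 * a3 * (F * F * S * Q) - 3 * a2 * F + (g2 / 2 - 6 * a2 * a2) * (F * F * F * S)
       - 90 * (a6 - a3 * a3) * (F^5 / 120 * S * S)"
proof -
  define X where "X = P - a2"
  have P: "P = X + a2" and "X \<noteq> 0"
    using assms(1) by (simp_all add: X_def)
  have "-3 * Y^2 + 2 * (6 * (X + a2)^2 - g2 / 2) * X + 12 * a2 * X^2 - 2 * g2 * X + 24 * a2^2 * X + 3 * a6 = 0"
    using curve unfolding P by algebra
  moreover have "F * (a1 - (Y + a3) / (2 * X)) * ((Y + a3) / (2 * X))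
       + ((6 * (X + a2)^2 - g2 / 2) * X - (Y + a3) * Y) / (2 * X^2) * F
     - (a1 * (F * ((Y + a3) / (2 * X))) - 2 * a3 * (F * F * (1 / (F^2 * X)) * (F * ((Y + a3) / (2 * X))))
       - 3 * a2 * F + (g2 / 2 - 6 * a2 * a2) * (F * F * F * (1 / (F^2 * X)))
       - 90 * (a6 - a3 * a3) * (F^5 / 120 * (1 / (F^2 * X)) * (1 / (F^2 * X))))
     = F * (-3 * Y^2 + 2 * (6 * (X + a2)^2 - g2 / 2) * X + 12 * a2 * X^2 - 2 * g2 * X
       + 24 * a2^2 * X + 3 * a6) / (4 * X^2)"
    using \<open>X \<noteq> 0\<close> \<open>F \<noteq> 0\<close> by (simp add: field_simps eval_nat_numeral)
  ultimately show ?thesis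
    unfolding S_def Q_def X_def[symmetric] P by simp
qed

section \<open>The Weierstrass functions near zero\<close>

locale weierstrass_sigma_function =
  fixes g2 g3 :: complex and \<sigma> :: "complex \<Rightarrow> complex"
  assumes weierstrass_sigma: "weierstrass_sigma g2 g3 \<sigma>"
begin

abbreviation "\<zeta> \<equiv> wzeta \<sigma>"
abbreviation "\<P> \<equiv> wp \<sigma>"
abbreviation "\<P>' \<equiv> deriv (wp \<sigma>)"

lemma sigma_holomorphic: "\<sigma> holomorphic_on UNIV"
  using weierstrass_sigma unfolding weierstrass_sigma_def by blast

lemma wp_curve: "\<sigma> u \<noteq> 0 \<Longrightarrow> (\<P>' u)^2 = 4 * (\<P> u)^3 - g2 * \<P> u - g3"
  using weierstrass_sigma unfolding weierstrass_sigma_def by blast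

lemma sigma_compose_holomorphic [holomorphic_intros]:
  "f holomorphic_on A \<Longrightarrow> (\<lambda>u. \<sigma> (f u)) holomorphic_on A"
  using holomorphic_on_compose_gen[OF _ sigma_holomorphic, of f A] by (simp add: o_def)

definition sigma_tail :: "complex \<Rightarrow> complex" where
  "sigma_tail = (SOME h. h holomorphic_on UNIV \<and> (\<forall>u. \<sigma> u = u + u^5 * h u))"

lemma sigma_tail: "sigma_tail holomorphic_on UNIV" "\<sigma> u = u + u^5 * sigma_tail u"
proof -
  obtain C r where "r > 0" "\<And>u. norm u < r \<Longrightarrow> norm (\<sigma> u - u) \<le> C * norm u ^ 5"
    using weierstrass_sigma unfolding weierstrass_sigma_def by blast
  moreover have "(\<lambda>u. \<sigma> u - u) holomorphic_on UNIV"
    by (intro holomorphic_intros sigma_holomorphic)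
  ultimately obtain h where "h holomorphic_on UNIV" "\<forall>u. \<sigma> u - u = u^5 * h u"
    using holomorphic_factor_power[of "\<lambda>u. \<sigma> u - u" r C 5] by blast
  then have "\<exists>h. h holomorphic_on UNIV \<and> (\<forall>u. \<sigma> u = u + u^5 * h u)"
    by (metis diff_add_cancel add.commute)
  from someI_ex[OF this] show "sigma_tail holomorphic_on UNIV" "\<sigma> u = u + u^5 * sigma_tail u"
    unfolding sigma_tail_def[symmetric] by auto
qed

lemma sigma_0 [simp]: "\<sigma> 0 = 0"
  using sigma_tail(2)[of 0] by simp

lemma deriv_sigma: "deriv \<sigma> u = 1 + 5 * u^4 * sigma_tail u + u^5 * deriv sigma_tail u"
proof -
  have "\<sigma> = (\<lambda>u. u + u^5 * sigma_tail u)"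
    using sigma_tail(2) by auto
  moreover have "((\<lambda>u. u + u^5 * sigma_tail u) has_field_derivative
      1 + 5 * u^4 * sigma_tail u + u^5 * deriv sigma_tail u) (at u)"
    using sigma_tail(1) by (auto intro!: derivative_eq_intros holomorphic_derivI)
  ultimately show ?thesis by (simp add: DERIV_imp_deriv)
qed

lemma deriv_sigma_0 [simp]: "deriv \<sigma> 0 = 1"
  by (simp add: deriv_sigma)

lemma open_sigma_nonzero: "open {u. \<sigma> u \<noteq> 0}"
  by (rule open_Collect_neq[OF holomorphic_on_imp_continuous_on[OF sigma_holomorphic] continuous_on_const])

lemma zeta_holomorphic: "\<zeta> holomorphic_on {u. \<sigma> u \<noteq> 0}"
proof -
  have "(\<lambda>u. deriv \<sigma> u / \<sigma> u) holomorphic_on {u. \<sigma> u \<noteq> 0}"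
    using holomorphic_on_subset[OF sigma_holomorphic]
      holomorphic_on_subset[OF holomorphic_deriv[OF sigma_holomorphic open_UNIV]] open_sigma_nonzero
    by (intro holomorphic_intros) auto
  then show ?thesis by (simp add: wzeta_def[abs_def])
qed

lemma wp_holomorphic: "\<P> holomorphic_on {u. \<sigma> u \<noteq> 0}"
  unfolding wp_def[abs_def] by (intro holomorphic_intros holomorphic_deriv zeta_holomorphic open_sigma_nonzero)

lemma wp'_holomorphic: "\<P>' holomorphic_on {u. \<sigma> u \<noteq> 0}"
  by (intro holomorphic_deriv wp_holomorphic open_sigma_nonzero)

lemma has_field_derivative_zeta: "\<sigma> u \<noteq> 0 \<Longrightarrow> (\<zeta> has_field_derivative - \<P> u) (at u)"
  using holomorphic_derivI[OF zeta_holomorphic open_sigma_nonzero, of u] by (simp add: wp_def)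

lemma has_field_derivative_wp: "\<sigma> u \<noteq> 0 \<Longrightarrow> (\<P> has_field_derivative \<P>' u) (at u)"
  using holomorphic_derivI[OF wp_holomorphic open_sigma_nonzero, of u] by simp

lemma has_field_derivative_wp': "\<sigma> u \<noteq> 0 \<Longrightarrow> (\<P>' has_field_derivative deriv \<P>' u) (at u)"
  using holomorphic_derivI[OF wp'_holomorphic open_sigma_nonzero, of u] by simp

lemma wp_second_deriv:
  assumes "\<sigma> u \<noteq> 0" "\<P>' u \<noteq> 0"
  shows "deriv \<P>' u = 6 * (\<P> u)^2 - g2 / 2"
proof -
  have "((\<lambda>x. (\<P>' x)^2) has_field_derivative 2 * \<P>' u * deriv \<P>' u) (at u)"
    using has_field_derivative_wp'[OF assms(1)] by (auto intro!: derivative_eq_intros)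
  then have "((\<lambda>x. 4 * (\<P> x)^3 - g2 * \<P> x - g3) has_field_derivative 2 * \<P>' u * deriv \<P>' u) (at u)"
    by (rule has_field_derivative_transform_within_open[OF _ open_sigma_nonzero])
      (use assms wp_curve in auto)
  moreover have "((\<lambda>x. 4 * (\<P> x)^3 - g2 * \<P> x - g3) has_field_derivative
      (12 * (\<P> u)^2 - g2) * \<P>' u) (at u)"
    using has_field_derivative_wp[OF assms(1)] by (auto intro!: derivative_eq_intros simp: algebra_simps)
  ultimately have "2 * \<P>' u * deriv \<P>' u = (12 * (\<P> u)^2 - g2) * \<P>' u"
    by (rule DERIV_unique)
  then have "\<P>' u * (2 * deriv \<P>' u) = \<P>' u * (12 * (\<P> u)^2 - g2)"
    by (simp add: mult_ac)
  with assms(2) have "2 * deriv \<P>' u = 12 * (\<P> u)^2 - g2"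
    using mult_left_cancel by blast
  then show ?thesis by (simp add: field_simps)
qed

lemma wp_eq_sigma:
  assumes "\<sigma> u \<noteq> 0"
  shows "\<P> u = ((deriv \<sigma> u)^2 - \<sigma> u * deriv (deriv \<sigma>) u) / (\<sigma> u)^2"
proof -
  have "((\<lambda>x. deriv \<sigma> x / \<sigma> x) has_field_derivative
      (deriv (deriv \<sigma>) u * \<sigma> u - deriv \<sigma> u * deriv \<sigma> u) / (\<sigma> u * \<sigma> u)) (at u)"
    using assms sigma_holomorphic
    by (auto intro!: derivative_eq_intros holomorphic_derivI holomorphic_deriv)
  then have "deriv \<zeta> u = (deriv (deriv \<sigma>) u * \<sigma> u - deriv \<sigma> u * deriv \<sigma> u) / (\<sigma> u * \<sigma> u)"
    unfolding wzeta_def[abs_def] by (rule DERIV_imp_deriv)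
  with assms show ?thesis by (simp add: wp_def field_simps power2_eq_square)
qed

definition sigma_quot :: "complex \<Rightarrow> complex" where
  "sigma_quot u = 1 + u^4 * sigma_tail u"

definition zeta_tail :: "complex \<Rightarrow> complex" where
  "zeta_tail u = (4 * sigma_tail u + u * deriv sigma_tail u) / sigma_quot u"

definition wp_tail :: "complex \<Rightarrow> complex" where
  "wp_tail u = -3 * zeta_tail u - u * deriv zeta_tail u"

lemma sigma_eq_sigma_quot: "\<sigma> u = u * sigma_quot u"
  by (simp add: sigma_tail(2) sigma_quot_def algebra_simps power_numeral_reduce)

lemma open_sigma_quot_nonzero: "open {u. sigma_quot u \<noteq> 0}"
proof (rule open_Collect_neq[OF _ continuous_on_const])
  show "continuous_on UNIV sigma_quot"
    unfolding sigma_quot_def[abs_def] using holomorphic_on_imp_continuous_on[OF sigma_tail(1)]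
    by (intro continuous_intros) auto
qed

lemma eventually_sigma_quot_nonzero: "\<forall>\<^sub>F u in at 0. u \<in> {u. sigma_quot u \<noteq> 0} - {0}"
  by (rule eventually_at_in_open[OF open_sigma_quot_nonzero]) (simp add: sigma_quot_def)

lemma zeta_tail_holomorphic: "zeta_tail holomorphic_on {u. sigma_quot u \<noteq> 0}"
  unfolding zeta_tail_def[abs_def] sigma_quot_def
  using holomorphic_on_subset[OF sigma_tail(1)]
    holomorphic_on_subset[OF holomorphic_deriv[OF sigma_tail(1) open_UNIV]] open_sigma_quot_nonzero
  by (intro holomorphic_intros) (auto simp: sigma_quot_def)

lemma wp_tail_holomorphic: "wp_tail holomorphic_on {u. sigma_quot u \<noteq> 0}"
  unfolding wp_tail_def[abs_def]
  by (intro holomorphic_intros holomorphic_deriv zeta_tail_holomorphic open_sigma_quot_nonzero)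

lemma zeta_tail_analytic: "zeta_tail analytic_on {0}"
  by (rule holomorphic_on_imp_analytic_at[OF zeta_tail_holomorphic open_sigma_quot_nonzero])
    (simp add: sigma_quot_def)

lemma wp_tail_analytic: "wp_tail analytic_on {0}"
  by (rule holomorphic_on_imp_analytic_at[OF wp_tail_holomorphic open_sigma_quot_nonzero])
    (simp add: sigma_quot_def)

lemma eventually_sigma_nonzero: "\<forall>\<^sub>F u in at 0. \<sigma> u \<noteq> 0"
  using eventually_sigma_quot_nonzero by eventually_elim (simp add: sigma_eq_sigma_quot)

lemma eventually_zeta_expansion: "\<forall>\<^sub>F u in at 0. \<zeta> u = 1/u + u^3 * zeta_tail u"
  using eventually_sigma_quot_nonzero
proof eventually_elim
  case (elim u)
  then have nonzero: "u \<noteq> 0" "sigma_quot u \<noteq> 0" by auto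
  define h h' where "h = sigma_tail u" and "h' = deriv sigma_tail u"
  have "\<zeta> u = (1 + 5 * u^4 * h + u^5 * h') / (u * sigma_quot u)"
    by (simp add: wzeta_def deriv_sigma sigma_eq_sigma_quot h_def h'_def)
  also have "1 + 5 * u^4 * h + u^5 * h' = sigma_quot u + u^4 * (4 * h + u * h')"
    by (simp add: sigma_quot_def h_def) (simp add: algebra_simps eval_nat_numeral)
  also have "(sigma_quot u + u^4 * (4 * h + u * h')) / (u * sigma_quot u)
      = 1/u + u^3 * ((4 * h + u * h') / sigma_quot u)"
    using nonzero by (simp add: field_simps eval_nat_numeral)
  finally show ?case
    by (simp add: zeta_tail_def h_def h'_def)
qed

lemma eventually_wp_expansion: "\<forall>\<^sub>F u in at 0. \<P> u = 1/u^2 + u^2 * wp_tail u"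
  using eventually_deriv_cong_at[OF eventually_zeta_expansion] eventually_sigma_quot_nonzero
proof eventually_elim
  case (elim u)
  then have "((\<lambda>x. 1/x + x^3 * zeta_tail x) has_field_derivative
      - 1/u^2 + 3 * u^2 * zeta_tail u + u^3 * deriv zeta_tail u) (at u)"
    using holomorphic_derivI[OF zeta_tail_holomorphic open_sigma_quot_nonzero, of u]
    by (auto intro!: derivative_eq_intros simp: field_simps power2_eq_square)
  with elim show ?case
    by (simp add: DERIV_imp_deriv wp_def wp_tail_def field_simps power2_eq_square power3_eq_cube)
qed

lemma eventually_wp'_expansion:
  "\<forall>\<^sub>F u in at 0. \<P>' u = -2/u^3 + 2 * u * wp_tail u + u^2 * deriv wp_tail u"
  using eventually_deriv_cong_at[OF eventually_wp_expansion] eventually_sigma_quot_nonzero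
proof eventually_elim
  case (elim u)
  then have "((\<lambda>x. 1/x^2 + x^2 * wp_tail x) has_field_derivative
      -2/u^3 + 2 * u * wp_tail u + u^2 * deriv wp_tail u) (at u)"
    using holomorphic_derivI[OF wp_tail_holomorphic open_sigma_quot_nonzero, of u]
    by (auto intro!: derivative_eq_intros simp: field_simps power2_eq_square power3_eq_cube)
  with elim show ?case
    by (simp add: DERIV_imp_deriv)
qed

lemma eventually_wp'_nonzero: "\<forall>\<^sub>F u in at 0. \<P>' u \<noteq> 0"
proof -
  define N where "N = (\<lambda>u. -2 + 2 * u^4 * wp_tail u + u^5 * deriv wp_tail u)"
  have "isCont N 0"
    unfolding N_def
    using analytic_at_imp_isCont[OF wp_tail_analytic] analytic_at_imp_isCont[OF analytic_deriv[OF wp_tail_analytic]]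
    by (intro continuous_intros) auto
  then have "\<forall>\<^sub>F u in at 0. N u \<noteq> 0"
    by (intro tendsto_imp_eventually_ne[of N "N 0"]) (simp_all add: isCont_def N_def)
  with eventually_wp'_expansion eventually_sigma_quot_nonzero show ?thesis
  proof eventually_elim
    case (elim u)
    then have "\<P>' u = N u / u^3"
      by (simp add: N_def field_simps eval_nat_numeral)
    moreover have "N u / u^3 \<noteq> 0"
      using elim by simp
    ultimately show ?case by simp
  qed
qed

subsection \<open>The addition theorem near zero\<close>

lemma wp_addition_rhs_ode:
  assumes S: "open S" "u \<in> S"
    and regular: "\<And>x. x \<in> S \<Longrightarrow> \<sigma> x \<noteq> 0 \<and> \<P>' x \<noteq> 0 \<and> \<P> x \<noteq> P0"
    and curve: "Q0^2 = 4 * P0^3 - g2 * P0 - g3"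
  defines "R \<equiv> \<lambda>x. (\<P>' x - Q0)^2 / (4 * (\<P> x - P0)^2) - \<P> x - P0"
  shows "deriv (deriv R) u = 6 * (R u)^2 - g2 / 2"
proof -
  define W where "W x = 6 * (\<P> x)^2 - g2 / 2" for x
  define T where "T x = W x * (\<P> x - P0) - (\<P>' x - Q0) * \<P>' x" for x
  define R1 where "R1 x = (\<P>' x - Q0) * T x / (2 * (\<P> x - P0)^3) - \<P>' x" for x
  define R2 where "R2 x = (W x * T x + (\<P>' x - Q0) * (12 * \<P> x * \<P>' x * (\<P> x - P0) - (\<P>' x - Q0) * W x))
      / (2 * (\<P> x - P0)^3) - 3 * ((\<P>' x - Q0) * T x) * \<P>' x / (2 * (\<P> x - P0)^4) - W x" for x
  have derivs: "(\<P> has_field_derivative \<P>' x) (at x)" "(\<P>' has_field_derivative W x) (at x)"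
      "((\<lambda>x. \<P> x - P0) has_field_derivative \<P>' x) (at x)"
      "((\<lambda>x. \<P>' x - Q0) has_field_derivative W x) (at x)"
      "(T has_field_derivative 12 * \<P> x * \<P>' x * (\<P> x - P0) - (\<P>' x - Q0) * W x) (at x)"
    if "x \<in> S" for x
  proof -
    have "\<sigma> x \<noteq> 0" "deriv \<P>' x = W x"
      using regular[OF that] wp_second_deriv by (auto simp: W_def)
    then show "(\<P> has_field_derivative \<P>' x) (at x)" "(\<P>' has_field_derivative W x) (at x)"
      using has_field_derivative_wp'[of x] has_field_derivative_wp[of x] by auto
    then show "((\<lambda>x. \<P> x - P0) has_field_derivative \<P>' x) (at x)"
      "((\<lambda>x. \<P>' x - Q0) has_field_derivative W x) (at x)"
      "(T has_field_derivative 12 * \<P> x * \<P>' x * (\<P> x - P0) - (\<P>' x - Q0) * W x) (at x)"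
      unfolding T_def[abs_def] W_def[abs_def]
      by (auto intro!: derivative_eq_intros simp: algebra_simps)
  qed
  have R_deriv: "(R has_field_derivative R1 x) (at x)" if "x \<in> S" for x
    using DERIV_diff[OF DERIV_diff[OF has_field_derivative_square_div_square[OF derivs(4,3)[OF that]]
        derivs(1)[OF that]] DERIV_const[of P0]] regular[OF that]
    unfolding R_def R1_def T_def by simp
  have R1_deriv: "(R1 has_field_derivative R2 x) (at x)" if "x \<in> S" for x
    using DERIV_diff[OF has_field_derivative_mult_div_cube[OF derivs(4,5,3)[OF that]] derivs(2)[OF that]]
      regular[OF that]
    unfolding R1_def[abs_def] R2_def by simp
  have "deriv (deriv R) u = deriv R1 u"
    using S R_deriv by (intro deriv_cong_ev) (auto simp: eventually_nhds DERIV_imp_deriv)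
  also have "\<dots> = R2 u"
    by (rule DERIV_imp_deriv[OF R1_deriv[OF S(2)]])
  also have "\<dots> = 6 * (R u)^2 - g2 / 2"
  proof -
    define X Y where "X = \<P> u - P0" and "Y = \<P>' u"
    have PX: "\<P> u = X + P0"
      by (simp add: X_def)
    have "X \<noteq> 0" "Y^2 = 4 * (X + P0)^3 - g2 * (X + P0) - g3"
      using regular[OF S(2)] wp_curve[of u] by (auto simp: X_def Y_def)
    from wp_addition_rhs_ode_algebra[OF this curve] show ?thesis
      unfolding R2_def T_def W_def R_def X_def[symmetric] Y_def[symmetric] unfolding PX .
  qed
  finally show ?thesis .
qed

lemma wp_addition_rhs_extension:
  obtains B where "B analytic_on {0}" "B 0 = P0" "deriv B 0 = Q0"
    "\<forall>\<^sub>F u in at 0. \<P> u \<noteq> P0 \<and> B u = (\<P>' u - Q0)^2 / (4 * (\<P> u - P0)^2) - \<P> u - P0"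
proof -
  define R where "R = (\<lambda>x. (\<P>' x - Q0)^2 / (4 * (\<P> x - P0)^2) - \<P> x - P0)"
  txt \<open>Near \<open>0\<close> we have \<open>D = u\<^sup>2 (\<wp> - P0)\<close> and \<open>N = u\<^sup>3 (\<wp>' - Q0)\<close>, so the double poles of \<open>R\<close>
    cancel because \<open>N + 2 D = u\<^sup>2 M\<close>; \<open>B\<close> is the resulting holomorphic extension of \<open>R\<close>.\<close>
  define D where "D = (\<lambda>u. 1 - P0 * u^2 + u^4 * wp_tail u)"
  define N where "N = (\<lambda>u. -2 + 2 * u^4 * wp_tail u + u^5 * deriv wp_tail u - Q0 * u^3)"
  define M where "M = (\<lambda>u. -2 * P0 - Q0 * u + 4 * u^2 * wp_tail u + u^3 * deriv wp_tail u)"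
  define B where "B = (\<lambda>u. (N u - 2 * D u) * M u / (4 * (D u)^2) - u^2 * wp_tail u - P0)"
  note tail = wp_tail_analytic analytic_deriv[OF wp_tail_analytic]
  have B_analytic: "B analytic_on {0}"
    unfolding B_def N_def M_def D_def using tail by (intro analytic_intros) auto
  have "isCont D 0"
    unfolding D_def using analytic_at_imp_isCont[OF wp_tail_analytic] by (intro continuous_intros) auto
  then have "\<forall>\<^sub>F u in at 0. D u \<noteq> 0"
    by (intro tendsto_imp_eventually_ne[of D "D 0"]) (simp_all add: isCont_def D_def)
  then have near: "\<forall>\<^sub>F u in at 0. u \<noteq> 0 \<and> D u \<noteq> 0 \<and>
      \<P> u = 1/u^2 + u^2 * wp_tail u \<and> \<P>' u = -2/u^3 + 2 * u * wp_tail u + u^2 * deriv wp_tail u"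
    using eventually_neq_at_within[of 0 0 UNIV] eventually_wp_expansion eventually_wp'_expansion
    by eventually_elim blast
  then have near_X: "\<forall>\<^sub>F u in at 0. \<P> u - P0 = D u / u^2 \<and> \<P> u \<noteq> P0"
    by eventually_elim (auto simp: D_def field_simps)
  have B_eq_R: "\<forall>\<^sub>F u in at 0. B u = R u"
    using near near_X
  proof eventually_elim
    case (elim u)
    have nonzero: "u \<noteq> 0" "D u \<noteq> 0" and P: "\<P> u = 1/u^2 + u^2 * wp_tail u"
      and X: "\<P> u - P0 = D u / u^2"
      using elim by blast+
    have "\<P>' u - Q0 = -2/u^3 + 2 * u * wp_tail u + u^2 * deriv wp_tail u - Q0"
      using elim by simp
    also have "\<dots> = N u / u^3"
      using nonzero by (simp add: N_def field_simps eval_nat_numeral)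
    finally have Y: "\<P>' u - Q0 = N u / u^3" .
    have M: "M u = (N u + 2 * D u) / u^2"
      using nonzero by (simp add: N_def D_def M_def field_simps eval_nat_numeral)
    have "R u = (N u / u^3)^2 / (4 * (D u / u^2)^2) - (1/u^2 + u^2 * wp_tail u) - P0"
      unfolding R_def Y X by (simp add: P)
    also have "\<dots> = B u"
      unfolding B_def using nonzero by (simp add: M field_simps) (simp add: algebra_simps eval_nat_numeral)
    finally show ?case by simp
  qed
  have B_initial: "B 0 = P0" "deriv B 0 = Q0"
  proof -
    show "B 0 = P0" by (simp add: B_def N_def D_def M_def)
    have "(wp_tail has_field_derivative deriv wp_tail 0) (at 0)"
      "(deriv wp_tail has_field_derivative deriv (deriv wp_tail) 0) (at 0)"
      using tail by (simp_all add: analytic_derivI)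
    then have "(B has_field_derivative Q0) (at 0)"
      unfolding B_def N_def D_def M_def by (auto intro!: derivative_eq_intros)
    then show "deriv B 0 = Q0" by (rule DERIV_imp_deriv)
  qed
  have "\<forall>\<^sub>F u in at 0. \<P> u \<noteq> P0 \<and> B u = R u"
    using near_X B_eq_R by eventually_elim simp
  with B_analytic B_initial show ?thesis
    unfolding R_def by (rule that)
qed

lemma wp_addition_near_0:
  assumes F: "F holomorphic_on ball 0 r" "r > 0"
    and F_ode: "\<And>u. u \<in> ball 0 r \<Longrightarrow> deriv (deriv F) u = 6 * (F u)^2 - g2 / 2"
    and F_initial: "F 0 = P0" "deriv F 0 = Q0"
    and curve: "Q0^2 = 4 * P0^3 - g2 * P0 - g3"
  shows "\<forall>\<^sub>F u in at 0. \<P> u \<noteq> P0 \<and> F u = (\<P>' u - Q0)^2 / (4 * (\<P> u - P0)^2) - \<P> u - P0"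
proof -
  define R where "R = (\<lambda>x. (\<P>' x - Q0)^2 / (4 * (\<P> x - P0)^2) - \<P> x - P0)"
  obtain B where B_analytic: "B analytic_on {0}" and B_initial: "B 0 = P0" "deriv B 0 = Q0"
    and B_eq_R: "\<forall>\<^sub>F u in at 0. \<P> u \<noteq> P0 \<and> B u = R u"
    unfolding R_def by (rule wp_addition_rhs_extension)
  have B_R: "\<forall>\<^sub>F u in at 0. B u = R u"
    using B_eq_R by eventually_elim simp
  obtain S where S: "open S" "0 \<in> S" "\<And>x. x \<in> S \<Longrightarrow> x \<noteq> 0 \<Longrightarrow> \<sigma> x \<noteq> 0 \<and> \<P>' x \<noteq> 0 \<and> \<P> x \<noteq> P0"
    using eventually_conj[OF eventually_sigma_nonzero eventually_conj[OF eventually_wp'_nonzero B_eq_R]]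
    unfolding eventually_at_topological by auto
  have "\<forall>\<^sub>F u in at 0. u \<in> S - {0}"
    by (rule eventually_at_in_open[OF S(1,2)])
  then have "\<forall>\<^sub>F u in at 0. deriv (deriv R) u = 6 * (R u)^2 - g2 / 2"
    by eventually_elim (use S curve in \<open>auto simp: R_def intro!: wp_addition_rhs_ode[of "S - {0}"]\<close>)
  then have "\<forall>\<^sub>F u in at 0. deriv (deriv B) u = 6 * (B u)^2 - g2 / 2"
    using eventually_deriv_cong_at[OF eventually_deriv_cong_at[OF B_R]] B_R
    by eventually_elim simp
  then have "\<forall>\<^sub>F u in nhds 0. deriv (deriv B) u = 6 * (B u)^2 - g2 / 2"
    using B_analytic
    by (intro eventually_nhds_eq_if_isCont analytic_at_imp_isCont analytic_intros) auto
  then obtain \<rho>2 where "\<rho>2 > 0"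
    and B_ode: "\<And>u. dist u 0 < \<rho>2 \<Longrightarrow> deriv (deriv B) u = 6 * (B u)^2 - g2 / 2"
    unfolding eventually_nhds_metric by blast
  obtain \<rho>1 where "\<rho>1 > 0" and B_holomorphic: "B holomorphic_on ball 0 \<rho>1"
    using B_analytic analytic_at_ball by blast
  define \<rho> where "\<rho> = min r (min \<rho>1 \<rho>2)"
  have "\<rho> > 0" using \<open>r > 0\<close> \<open>\<rho>1 > 0\<close> \<open>\<rho>2 > 0\<close> by (simp add: \<rho>_def)
  have F_eq_B: "F u = B u" if "u \<in> ball 0 \<rho>" for u
  proof (rule second_order_ode_unique[where c = 0, OF open_ball connected_ball _ that])
    show "F holomorphic_on ball 0 \<rho>" "B holomorphic_on ball 0 \<rho>"
      by (auto intro!: holomorphic_on_subset[OF F(1)] holomorphic_on_subset[OF B_holomorphic] subset_ball simp: \<rho>_def)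
  qed (use \<open>\<rho> > 0\<close> F_ode B_ode F_initial B_initial in \<open>auto simp: \<rho>_def dist_norm\<close>)
  show ?thesis
    using eventually_at_ball[OF \<open>\<rho> > 0\<close>, of 0 UNIV] B_eq_R
    by eventually_elim (auto simp: F_eq_B R_def)
qed

lemma sigma_wp'_nonzero_ball:
  assumes "\<sigma> v \<noteq> 0" "\<P>' v \<noteq> 0"
  obtains r where "r > 0" "\<And>x. dist x v < r \<Longrightarrow> \<sigma> x \<noteq> 0 \<and> \<P>' x \<noteq> 0"
proof -
  have "isCont \<sigma> v"
    using sigma_holomorphic by (intro analytic_at_imp_isCont holomorphic_on_imp_analytic_at) auto
  moreover have "isCont \<P>' v"
    using wp'_holomorphic open_sigma_nonzero assms(1)
    by (intro analytic_at_imp_isCont holomorphic_on_imp_analytic_at) auto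
  ultimately obtain r1 r2 where "r1 > 0" "\<And>x. dist v x < r1 \<Longrightarrow> \<sigma> x \<noteq> 0"
    and "r2 > 0" "\<And>x. dist v x < r2 \<Longrightarrow> \<P>' x \<noteq> 0"
    using continuous_at_avoid assms by metis
  then show ?thesis
    by (metis that dist_commute min_less_iff_conj)
qed

lemma has_field_derivative_wp_shift:
  assumes "s * s = 1" "\<sigma> (v + s * u) \<noteq> 0" "\<P>' (v + s * u) \<noteq> 0"
  shows "((\<lambda>u. \<P> (v + s * u)) has_field_derivative s * \<P>' (v + s * u)) (at u)"
    and "((\<lambda>u. s * \<P>' (v + s * u)) has_field_derivative 6 * (\<P> (v + s * u))^2 - g2 / 2) (at u)"
proof -
  have lin: "((\<lambda>u. v + s * u) has_field_derivative s) (at u)"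
    by (auto intro!: derivative_eq_intros)
  show "((\<lambda>u. \<P> (v + s * u)) has_field_derivative s * \<P>' (v + s * u)) (at u)"
    using DERIV_chain2[OF has_field_derivative_wp[OF assms(2)] lin] by (simp add: mult.commute)
  have "((\<lambda>u. s * \<P>' (v + s * u)) has_field_derivative s * (deriv \<P>' (v + s * u) * s)) (at u)"
    by (intro DERIV_cmult DERIV_chain2[OF has_field_derivative_wp'[OF assms(2)] lin])
  moreover have "s * (deriv \<P>' (v + s * u) * s) = deriv \<P>' (v + s * u)"
    by (metis mult.assoc mult.commute mult_1_left assms(1))
  ultimately have "((\<lambda>u. s * \<P>' (v + s * u)) has_field_derivative deriv \<P>' (v + s * u)) (at u)"
    by simp
  then show "((\<lambda>u. s * \<P>' (v + s * u)) has_field_derivative 6 * (\<P> (v + s * u))^2 - g2 / 2) (at u)"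
    using wp_second_deriv[OF assms(2,3)] by simp
qed

lemma wp_addition_at:
  assumes "\<sigma> v \<noteq> 0" "\<P>' v \<noteq> 0" "s^2 = 1"
  shows "\<forall>\<^sub>F u in at 0. \<P> u \<noteq> \<P> v \<and>
    \<P> (v + s * u) = (\<P>' u - s * \<P>' v)^2 / (4 * (\<P> u - \<P> v)^2) - \<P> u - \<P> v"
proof -
  obtain r where "r > 0" and regular: "\<And>x. dist x v < r \<Longrightarrow> \<sigma> x \<noteq> 0 \<and> \<P>' x \<noteq> 0"
    using sigma_wp'_nonzero_ball[OF assms(1,2)] by blast
  have "s * s = 1"
    using assms(3) by (simp add: power2_eq_square)
  have "norm s ^ 2 = 1 ^ 2"
    using assms(3) by (metis norm_one norm_power power_one)
  then have "norm s = 1"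
    by (rule power2_eq_imp_eq) simp_all
  define F where "F = (\<lambda>u. \<P> (v + s * u))"
  have F_deriv: "(F has_field_derivative s * \<P>' (v + s * u)) (at u)"
    and F'_deriv: "((\<lambda>u. s * \<P>' (v + s * u)) has_field_derivative 6 * (F u)^2 - g2 / 2) (at u)"
    if "u \<in> ball 0 r" for u
    using has_field_derivative_wp_shift[OF \<open>s * s = 1\<close>] regular[of "v + s * u"] that \<open>norm s = 1\<close>
    by (auto simp: F_def dist_norm norm_mult)
  have F_holomorphic: "F holomorphic_on ball 0 r"
    unfolding holomorphic_on_open[OF open_ball] using F_deriv by blast
  have F_ode: "deriv (deriv F) u = 6 * (F u)^2 - g2 / 2" if "u \<in> ball 0 r" for u
  proof -
    have "deriv (deriv F) u = deriv (\<lambda>u. s * \<P>' (v + s * u)) u"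
      by (rule deriv_cong_ev)
        (use F_deriv that in \<open>auto simp: eventually_nhds DERIV_imp_deriv intro!: exI[of _ "ball 0 r"]\<close>)
    also have "\<dots> = 6 * (F u)^2 - g2 / 2"
      by (rule DERIV_imp_deriv[OF F'_deriv[OF that]])
    finally show ?thesis .
  qed
  have "F 0 = \<P> v" "deriv F 0 = s * \<P>' v"
    using DERIV_imp_deriv[OF F_deriv[of 0]] \<open>r > 0\<close> by (simp_all add: F_def)
  moreover have "(s * \<P>' v)^2 = 4 * (\<P> v)^3 - g2 * \<P> v - g3"
    using wp_curve[OF assms(1)] assms(3) by (simp add: power_mult_distrib)
  ultimately show ?thesis
    using wp_addition_near_0[OF F_holomorphic \<open>r > 0\<close> F_ode] unfolding F_def by simp
qed

end

section \<open>The generalized Baker--Akhiezer function\<close>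

locale baker_akhiezer = weierstrass_sigma_function +
  fixes \<mu>1 v w :: complex
  assumes sigma_v_nonzero: "\<sigma> v \<noteq> 0" and wp'_v_nonzero: "\<P>' v \<noteq> 0"
begin

text \<open>Here \<open>a\<^sub>6\<close> is expressed through the curve; it equals \<open>4 \<mu>\<^sub>6 + \<mu>\<^sub>3\<^sup>2\<close> by the formula for \<open>g\<^sub>3\<close>.\<close>

abbreviation "\<alpha> \<equiv> \<P>' w / \<P>' v"
abbreviation "a1 \<equiv> \<mu>1 / 2"
abbreviation "a2 \<equiv> \<P> v"
abbreviation "a3 \<equiv> \<P>' w"
abbreviation "a4 \<equiv> g2 / 2"
abbreviation "a6 \<equiv> 4 * a2^3 - g2 * a2 - g3"
abbreviation "c \<equiv> - \<mu>1 / 2 + \<alpha> * \<zeta> v"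

definition ba_domain :: "complex set" where
  "ba_domain = {u. 0 < Re (\<sigma> (u + v) / \<sigma> v) \<and> 0 < Re (\<sigma> (v - u) / \<sigma> v)}"

lemma open_ba_domain: "open ba_domain"
proof -
  have "continuous_on UNIV (\<lambda>u. Re (\<sigma> (u + v) / \<sigma> v))" "continuous_on UNIV (\<lambda>u. Re (\<sigma> (v - u) / \<sigma> v))"
    by (intro continuous_intros holomorphic_on_imp_continuous_on holomorphic_intros; simp)+
  then show ?thesis
    unfolding ba_domain_def Collect_conj_eq by (intro open_Int open_Collect_less continuous_on_const)
qed

lemma zero_in_ba_domain: "0 \<in> ba_domain"
  using sigma_v_nonzero by (simp add: ba_domain_def)

lemma ba_domain_not_nonpos_Reals:
  assumes "u \<in> ba_domain"
  shows "\<sigma> (u + v) / \<sigma> v \<notin> \<real>\<^sub>\<le>\<^sub>0" "\<sigma> (v - u) / \<sigma> v \<notin> \<real>\<^sub>\<le>\<^sub>0"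
    "\<sigma> (u + v) \<noteq> 0" "\<sigma> (v - u) \<noteq> 0"
  using assms by (auto simp: ba_domain_def complex_nonpos_Reals_iff)

definition ba_exp :: "complex \<Rightarrow> complex" where
  "ba_exp u = exp (- ((1 - \<alpha>) / 2 * Ln (\<sigma> (u + v) / \<sigma> v) + (1 + \<alpha>) / 2 * Ln (\<sigma> (v - u) / \<sigma> v) + c * u))"

definition inv_ba :: "complex \<Rightarrow> complex" where
  "inv_ba u = \<sigma> u * ba_exp u"

lemma inv_gen_BA:
  assumes "u \<in> ba_domain"
  shows "1 / gen_BA \<sigma> \<mu>1 v w u = inv_ba u"
proof -
  define A B C where "A = (1 - \<alpha>) / 2 * Ln (\<sigma> (u + v) / \<sigma> v)"
    and "B = (1 + \<alpha>) / 2 * Ln (\<sigma> (v - u) / \<sigma> v)" and "C = c * u"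
  have "gen_BA \<sigma> \<mu>1 v w u = exp A * exp B / \<sigma> u * exp C"
    unfolding gen_BA_def Let_def powr_def A_def B_def C_def
    using ba_domain_not_nonpos_Reals[OF assms] sigma_v_nonzero by simp
  moreover have "1 / (exp A * exp B / \<sigma> u * exp C) = \<sigma> u * exp (- (A + B + C))"
    by (cases "\<sigma> u = 0") (simp_all add: field_simps exp_add[symmetric] exp_minus)
  ultimately show ?thesis
    by (simp add: inv_ba_def ba_exp_def A_def B_def C_def)
qed

lemma ba_exp_holomorphic: "ba_exp holomorphic_on ba_domain"
  unfolding ba_exp_def[abs_def] using ba_domain_not_nonpos_Reals sigma_v_nonzero
  by (intro holomorphic_intros)

lemma inv_ba_holomorphic: "inv_ba holomorphic_on ba_domain"
  unfolding inv_ba_def[abs_def] by (intro holomorphic_intros ba_exp_holomorphic)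

lemma has_field_derivative_ba_exp:
  assumes "u \<in> ba_domain"
  shows "(ba_exp has_field_derivative
    ba_exp u * - ((1 - \<alpha>) / 2 * \<zeta> (u + v) - (1 + \<alpha>) / 2 * \<zeta> (v - u) + c)) (at u)"
proof -
  note dom = ba_domain_not_nonpos_Reals[OF assms]
  have \<sigma>': "(\<sigma> has_field_derivative deriv \<sigma> x) (at x)" for x
    using holomorphic_derivI[OF sigma_holomorphic] by auto
  have "((\<lambda>x. \<sigma> (x + v)) has_field_derivative deriv \<sigma> (u + v)) (at u)"
    using \<sigma>' DERIV_shift by blast
  from DERIV_chain2[where g = "\<lambda>x. \<sigma> (x + v) / \<sigma> v", OF has_field_derivative_Ln[OF dom(1)]
      DERIV_cdivide[OF this]]
  have Ln_plus: "((\<lambda>x. Ln (\<sigma> (x + v) / \<sigma> v)) has_field_derivative \<zeta> (u + v)) (at u)"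
    using dom sigma_v_nonzero by (simp add: wzeta_def field_simps)
  have "((\<lambda>x. v - x) has_field_derivative - 1) (at u)"
    by (auto intro!: derivative_eq_intros)
  from DERIV_chain2[where f = \<sigma> and g = "\<lambda>x. v - x", OF \<sigma>'[of "v - u"] this]
  have "((\<lambda>x. \<sigma> (v - x)) has_field_derivative - deriv \<sigma> (v - u)) (at u)"
    by simp
  from DERIV_chain2[where g = "\<lambda>x. \<sigma> (v - x) / \<sigma> v", OF has_field_derivative_Ln[OF dom(2)]
      DERIV_cdivide[OF this]]
  have Ln_minus: "((\<lambda>x. Ln (\<sigma> (v - x) / \<sigma> v)) has_field_derivative - \<zeta> (v - u)) (at u)"
    using dom sigma_v_nonzero by (simp add: wzeta_def field_simps)
  have "((\<lambda>x. - ((1 - \<alpha>) / 2 * Ln (\<sigma> (x + v) / \<sigma> v) + (1 + \<alpha>) / 2 * Ln (\<sigma> (v - x) / \<sigma> v) + c * x))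
      has_field_derivative - ((1 - \<alpha>) / 2 * \<zeta> (u + v) + (1 + \<alpha>) / 2 * - \<zeta> (v - u) + c * 1)) (at u)"
    by (rule DERIV_minus DERIV_add DERIV_cmult Ln_plus Ln_minus DERIV_ident)+
  from DERIV_fun_exp[OF this] show ?thesis
    unfolding ba_exp_def[abs_def] by simp
qed

lemma zeta_shift_holomorphic:
  "(\<lambda>u. \<zeta> (u + v)) holomorphic_on ba_domain" "(\<lambda>u. \<zeta> (v - u)) holomorphic_on ba_domain"
proof -
  have "\<zeta> \<circ> (\<lambda>u. u + v) holomorphic_on ba_domain" "\<zeta> \<circ> (\<lambda>u. v - u) holomorphic_on ba_domain"
    using ba_domain_not_nonpos_Reals(3,4)
    by (auto intro!: holomorphic_on_compose_gen[OF _ zeta_holomorphic] holomorphic_intros)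
  then show "(\<lambda>u. \<zeta> (u + v)) holomorphic_on ba_domain" "(\<lambda>u. \<zeta> (v - u)) holomorphic_on ba_domain"
    by (simp_all add: o_def)
qed

lemma has_field_derivative_zeta_shift:
  assumes "u \<in> ba_domain"
  shows "((\<lambda>x. \<zeta> (x + v)) has_field_derivative - \<P> (u + v)) (at u)"
    "((\<lambda>x. \<zeta> (v - x)) has_field_derivative \<P> (v - u)) (at u)"
proof -
  note nonzero = ba_domain_not_nonpos_Reals(3,4)[OF assms]
  show "((\<lambda>x. \<zeta> (x + v)) has_field_derivative - \<P> (u + v)) (at u)"
    using has_field_derivative_zeta[OF nonzero(1)] DERIV_shift by blast
  have "((\<lambda>x. v - x) has_field_derivative - 1) (at u)"
    by (auto intro!: derivative_eq_intros)
  from DERIV_chain2[where f = \<zeta> and g = "\<lambda>x. v - x", OF has_field_derivative_zeta[OF nonzero(2)] this]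
  show "((\<lambda>x. \<zeta> (v - x)) has_field_derivative \<P> (v - u)) (at u)"
    by simp
qed

lemma eventually_wp_addition:
  "\<forall>\<^sub>F u in at 0. \<P> u \<noteq> a2 \<and>
     \<P> (u + v) = (\<P>' u - \<P>' v)^2 / (4 * (\<P> u - a2)^2) - \<P> u - a2 \<and>
     \<P> (v - u) = (\<P>' u + \<P>' v)^2 / (4 * (\<P> u - a2)^2) - \<P> u - a2"
proof -
  have "\<forall>\<^sub>F u in at 0. \<P> u \<noteq> a2 \<and> \<P> (u + v) = (\<P>' u - \<P>' v)^2 / (4 * (\<P> u - a2)^2) - \<P> u - a2"
    using wp_addition_at[OF sigma_v_nonzero wp'_v_nonzero, of 1] by (simp add: add.commute)
  moreover have "\<forall>\<^sub>F u in at 0. \<P> (v - u) = (\<P>' u + \<P>' v)^2 / (4 * (\<P> u - a2)^2) - \<P> u - a2"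
    using wp_addition_at[OF sigma_v_nonzero wp'_v_nonzero, of "- 1"] by (simp add: eventually_conj_iff)
  ultimately show ?thesis
    by eventually_elim blast
qed

definition zeta_defect :: "complex \<Rightarrow> complex" where
  "zeta_defect u = \<zeta> u - (1 - \<alpha>) / 2 * \<zeta> (u + v) + (1 + \<alpha>) / 2 * \<zeta> (v - u) - c
     - (a1 - (\<P>' u + a3) / (2 * (\<P> u - a2)))"

lemma eventually_zeta_defect_deriv: "\<forall>\<^sub>F u in at 0. (zeta_defect has_field_derivative 0) (at u)"
  using eventually_wp_addition eventually_at_in_open[OF open_ba_domain zero_in_ba_domain]
    eventually_sigma_nonzero eventually_wp'_nonzero
proof eventually_elim
  case (elim u)
  then have u: "u \<in> ba_domain" "\<sigma> u \<noteq> 0" "\<P> u \<noteq> a2" by auto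
  have "((\<lambda>x. \<P>' x + a3) has_field_derivative 6 * (\<P> u)^2 - g2 / 2) (at u)"
    using has_field_derivative_wp'[OF u(2)] wp_second_deriv[OF u(2)] elim
    by (auto intro!: derivative_eq_intros)
  moreover have "((\<lambda>x. \<P> x - a2) has_field_derivative \<P>' u) (at u)"
    using has_field_derivative_wp[OF u(2)] by (auto intro!: derivative_eq_intros)
  ultimately have "(zeta_defect has_field_derivative
      (- \<P> u - (1 - \<alpha>) / 2 * - \<P> (u + v) + (1 + \<alpha>) / 2 * \<P> (v - u) - 0)
      - (0 - ((6 * (\<P> u)^2 - g2 / 2) * (\<P> u - a2) - (\<P>' u + a3) * \<P>' u) / (2 * (\<P> u - a2)^2))) (at u)"
    unfolding zeta_defect_def[abs_def] using u
    by (intro DERIV_diff DERIV_add DERIV_cmult DERIV_const has_field_derivative_zeta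
        has_field_derivative_zeta_shift has_field_derivative_div_double) auto
  moreover have "(- \<P> u - (1 - \<alpha>) / 2 * - \<P> (u + v) + (1 + \<alpha>) / 2 * \<P> (v - u) - 0)
      - (0 - ((6 * (\<P> u)^2 - g2 / 2) * (\<P> u - a2) - (\<P>' u + a3) * \<P>' u) / (2 * (\<P> u - a2)^2))
    = - \<P> u + (1 - \<alpha>) / 2 * \<P> (u + v) + (1 + \<alpha>) / 2 * \<P> (v - u)
      + ((6 * (\<P> u)^2 - g2 / 2) * (\<P> u - a2) - (\<P>' u + a3) * \<P>' u) / (2 * (\<P> u - a2)^2)"
    by simp
  moreover have "\<alpha> * \<P>' v = a3"
    using wp'_v_nonzero by simp
  then have "- \<P> u + (1 - \<alpha>) / 2 * \<P> (u + v) + (1 + \<alpha>) / 2 * \<P> (v - u)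
      + ((6 * (\<P> u)^2 - g2 / 2) * (\<P> u - a2) - (\<P>' u + a3) * \<P>' u) / (2 * (\<P> u - a2)^2) = 0"
    using log_derivative_identity_algebra[OF u(3) wp_curve[OF u(2)] wp_curve[OF sigma_v_nonzero], of \<alpha>]
      elim by simp
  ultimately show ?case
    by (simp only:)
qed

lemma zeta_defect_extension:
  obtains T where "T analytic_on {0}" "T 0 = 0" "\<forall>\<^sub>F u in at 0. T u = zeta_defect u"
proof -
  define D where "D = (\<lambda>u. 1 - a2 * u^2 + u^4 * wp_tail u)"
  txt \<open>The simple poles of \<open>\<zeta>\<close> and of the quotient cancel, as in \<open>wp_addition_rhs_extension\<close>.\<close>
  define T where "T = (\<lambda>u. u * (- 2 * a2 + 4 * u^2 * wp_tail u + u^3 * deriv wp_tail u + a3 * u) / (2 * D u)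
      + u^3 * zeta_tail u - (1 - \<alpha>) / 2 * \<zeta> (u + v) + (1 + \<alpha>) / 2 * \<zeta> (v - u) - c - a1)"
  have "isCont D 0"
    unfolding D_def using analytic_at_imp_isCont[OF wp_tail_analytic] by (intro continuous_intros) auto
  then have "\<forall>\<^sub>F u in at 0. D u \<noteq> 0"
    by (intro tendsto_imp_eventually_ne[of D "D 0"]) (simp_all add: isCont_def D_def)
  then have near: "\<forall>\<^sub>F u in at 0. u \<noteq> 0 \<and> D u \<noteq> 0 \<and>
      \<zeta> u = 1/u + u^3 * zeta_tail u \<and> \<P> u = 1/u^2 + u^2 * wp_tail u \<and>
      \<P>' u = -2/u^3 + 2 * u * wp_tail u + u^2 * deriv wp_tail u"
    using eventually_neq_at_within[of 0 0 UNIV] eventually_zeta_expansion eventually_wp_expansion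
      eventually_wp'_expansion
    by eventually_elim blast
  have T_eq: "\<forall>\<^sub>F u in at 0. T u = zeta_defect u"
    using near
  proof eventually_elim
    case (elim u)
    then have nonzero: "u \<noteq> 0" "D u \<noteq> 0" by auto
    define N where "N = -2 + 2 * u^4 * wp_tail u + u^5 * deriv wp_tail u + a3 * u^3"
    define M where "M = - 2 * a2 + 4 * u^2 * wp_tail u + u^3 * deriv wp_tail u + a3 * u"
    have X: "\<P> u - a2 = D u / u^2" and Y: "\<P>' u + a3 = N / u^3"
      using elim nonzero by (simp_all add: D_def N_def field_simps eval_nat_numeral)
    have quotient: "(\<P>' u + a3) / (2 * (\<P> u - a2)) = N / (2 * u * D u)"
      unfolding X Y using nonzero by (simp add: field_simps eval_nat_numeral)
    have "2 * D u + N = u^2 * M"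
      unfolding N_def M_def D_def by (simp add: algebra_simps eval_nat_numeral)
    then have "1/u + N / (2 * u * D u) = u * M / (2 * D u)"
      using nonzero by (simp add: field_simps power2_eq_square)
    then show ?case
      using elim unfolding T_def zeta_defect_def quotient M_def by (simp add: algebra_simps)
  qed
  have T_analytic: "T analytic_on {0}"
  proof -
    have "(\<lambda>u. \<zeta> (u + v)) analytic_on {0}" "(\<lambda>u. \<zeta> (v - u)) analytic_on {0}"
      using zeta_shift_holomorphic open_ba_domain zero_in_ba_domain
      by (auto intro: holomorphic_on_imp_analytic_at)
    then show ?thesis
      unfolding T_def D_def
      using wp_tail_analytic analytic_deriv[OF wp_tail_analytic] zeta_tail_analytic
      by (intro analytic_intros) auto
  qed
  have "T 0 = 0"
    using wp'_v_nonzero by (simp add: T_def D_def field_simps)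
  from T_analytic this T_eq show ?thesis
    by (rule that)
qed

lemma zeta_combination_near_0:
  "\<forall>\<^sub>F u in at 0. \<zeta> u - (1 - \<alpha>) / 2 * \<zeta> (u + v) + (1 + \<alpha>) / 2 * \<zeta> (v - u) - c
     = a1 - (\<P>' u + a3) / (2 * (\<P> u - a2))"
proof -
  obtain T where T: "T analytic_on {0}" "T 0 = 0" "\<forall>\<^sub>F u in at 0. T u = zeta_defect u"
    by (rule zeta_defect_extension)
  have "\<forall>\<^sub>F u in at 0. T u = zeta_defect u \<and> (zeta_defect has_field_derivative 0) (at u)"
    using T(3) eventually_zeta_defect_deriv by eventually_elim blast
  from eventually_constant_if_deriv_zero[OF T(1) this] show ?thesis
  proof eventually_elim
    case (elim u)
    then have "zeta_defect u = 0"
      using T(2) by simp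
    then show ?case
      unfolding zeta_defect_def right_minus_eq .
  qed
qed

lemma eventually_deriv_inv_ba:
  "\<forall>\<^sub>F u in at 0. deriv inv_ba u = inv_ba u * (a1 - (\<P>' u + a3) / (2 * (\<P> u - a2)))"
  using zeta_combination_near_0 eventually_sigma_nonzero
    eventually_at_in_open[OF open_ba_domain zero_in_ba_domain]
proof eventually_elim
  case (elim u)
  have "(\<sigma> has_field_derivative deriv \<sigma> u) (at u)"
    using holomorphic_derivI[OF sigma_holomorphic] by auto
  from DERIV_mult[OF this has_field_derivative_ba_exp] elim
  have "deriv inv_ba u = deriv \<sigma> u * ba_exp u
      + ba_exp u * - ((1 - \<alpha>) / 2 * \<zeta> (u + v) - (1 + \<alpha>) / 2 * \<zeta> (v - u) + c) * \<sigma> u"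
    unfolding inv_ba_def[abs_def] by (intro DERIV_imp_deriv) auto
  also have "deriv \<sigma> u = \<sigma> u * \<zeta> u"
    using elim by (simp add: wzeta_def)
  also have "\<sigma> u * \<zeta> u * ba_exp u
      + ba_exp u * - ((1 - \<alpha>) / 2 * \<zeta> (u + v) - (1 + \<alpha>) / 2 * \<zeta> (v - u) + c) * \<sigma> u
      = inv_ba u * (\<zeta> u - (1 - \<alpha>) / 2 * \<zeta> (u + v) + (1 + \<alpha>) / 2 * \<zeta> (v - u) - c)"
    by (simp add: inv_ba_def algebra_simps)
  finally show ?case
    using elim by simp
qed

text \<open>\<open>ba_S = 1/(F\<^sup>2 (\<wp> - a\<^sub>2))\<close>, written through \<open>\<wp> = (\<sigma>'\<^sup>2 - \<sigma> \<sigma>'')/\<sigma>\<^sup>2\<close> so that it is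
  holomorphic at \<open>0\<close>.\<close>

definition ba_S :: "complex \<Rightarrow> complex" where
  "ba_S u = 1 / ((ba_exp u)^2 * ((deriv \<sigma> u)^2 - \<sigma> u * deriv (deriv \<sigma>) u - a2 * (\<sigma> u)^2))"

definition ba_P :: "complex \<Rightarrow> complex" where
  "ba_P u = a1 * inv_ba u - deriv inv_ba u"

definition ba_D :: "nat \<Rightarrow> complex \<Rightarrow> complex" where
  "ba_D k u = (inv_ba u)^k / fact k"

lemma inv_ba_analytic: "inv_ba analytic_on {0}"
  by (rule holomorphic_on_imp_analytic_at[OF inv_ba_holomorphic open_ba_domain zero_in_ba_domain])

lemma ba_exp_0: "ba_exp 0 = 1"
  using sigma_v_nonzero by (simp add: ba_exp_def)

lemma inv_ba_0: "inv_ba 0 = 0"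
  by (simp add: inv_ba_def)

lemma deriv_inv_ba_0: "deriv inv_ba 0 = 1"
proof -
  have "(\<sigma> has_field_derivative 1) (at 0)"
    using holomorphic_derivI[OF sigma_holomorphic, of 0] by simp
  from DERIV_mult[OF this has_field_derivative_ba_exp[OF zero_in_ba_domain]]
  show ?thesis
    unfolding inv_ba_def[abs_def] by (auto dest!: DERIV_imp_deriv simp: ba_exp_0)
qed

lemma ba_S_analytic: "ba_S analytic_on {0}" and ba_S_0: "ba_S 0 = 1"
proof -
  define Den where "Den u = (ba_exp u)^2 * ((deriv \<sigma> u)^2 - \<sigma> u * deriv (deriv \<sigma>) u - a2 * (\<sigma> u)^2)" for u
  have "\<sigma> analytic_on {0}"
    by (rule holomorphic_on_imp_analytic_at[OF sigma_holomorphic open_UNIV UNIV_I])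
  then have "deriv \<sigma> analytic_on {0}" "deriv (deriv \<sigma>) analytic_on {0}" "\<sigma> analytic_on {0}"
    by (auto intro: analytic_deriv)
  moreover have "ba_exp analytic_on {0}"
    by (rule holomorphic_on_imp_analytic_at[OF ba_exp_holomorphic open_ba_domain zero_in_ba_domain])
  ultimately have "Den analytic_on {0}"
    unfolding Den_def[abs_def] by (intro analytic_intros) auto
  moreover have "Den 0 = 1"
    by (simp add: Den_def ba_exp_0)
  ultimately show "ba_S analytic_on {0}" "ba_S 0 = 1"
    unfolding ba_S_def[abs_def] Den_def[symmetric] by (auto intro!: analytic_intros)
qed

lemma ba_P_analytic: "ba_P analytic_on {0}"
  unfolding ba_P_def[abs_def] using inv_ba_analytic by (intro analytic_intros)

lemma ba_P_0: "ba_P 0 = -1"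
  by (simp add: ba_P_def inv_ba_0 deriv_inv_ba_0)

lemma ba_D_analytic: "ba_D k analytic_on {0}"
  unfolding ba_D_def[abs_def] using inv_ba_analytic by (intro analytic_intros) auto

lemma ba_D_0: "ba_D k 0 = (if k = 0 then 1 else 0)"
  by (simp add: ba_D_def inv_ba_0)

lemma ba_D_1: "ba_D 1 = inv_ba" "ba_D (Suc 0) = inv_ba"
  by (simp_all add: ba_D_def[abs_def])

lemma deriv_ba_D:
  assumes "u \<in> ba_domain"
  shows "deriv (ba_D (Suc k)) u = ba_D k u * (a1 * inv_ba u - ba_P u)"
proof -
  have "(inv_ba has_field_derivative deriv inv_ba u) (at u)"
    using holomorphic_derivI[OF inv_ba_holomorphic open_ba_domain assms] .
  from DERIV_power[OF this, of "Suc k"]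
  have "((\<lambda>u. (inv_ba u)^Suc k / fact (Suc k)) has_field_derivative
      of_nat (Suc k) * (deriv inv_ba u * (inv_ba u)^k) / fact (Suc k)) (at u)"
    by (intro DERIV_cdivide) simp
  moreover have "of_nat (Suc k) * (deriv inv_ba u * (inv_ba u)^k) / fact (Suc k)
      = (inv_ba u)^k / fact k * deriv inv_ba u"
    by (simp add: fact_Suc field_simps del: of_nat_Suc)
  ultimately show ?thesis
    unfolding ba_D_def[abs_def] ba_P_def by (simp add: DERIV_imp_deriv)
qed

lemma eventually_ba_near_0:
  "\<forall>\<^sub>F u in at 0. u \<in> ba_domain \<and> \<sigma> u \<noteq> 0 \<and> \<P> u \<noteq> a2 \<and> inv_ba u \<noteq> 0 \<and>
     deriv inv_ba u = inv_ba u * (a1 - (\<P>' u + a3) / (2 * (\<P> u - a2))) \<and>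
     ba_S u = 1 / ((inv_ba u)^2 * (\<P> u - a2)) \<and>
     ba_P u = inv_ba u * ((\<P>' u + a3) / (2 * (\<P> u - a2)))"
  using eventually_at_in_open[OF open_ba_domain zero_in_ba_domain] eventually_sigma_nonzero
    eventually_wp_addition eventually_deriv_inv_ba
proof eventually_elim
  case (elim u)
  then have u: "u \<in> ba_domain" "\<sigma> u \<noteq> 0" "\<P> u \<noteq> a2" by auto
  have "inv_ba u \<noteq> 0"
    using u by (simp add: inv_ba_def ba_exp_def)
  moreover have "(deriv \<sigma> u)^2 - \<sigma> u * deriv (deriv \<sigma>) u = (\<sigma> u)^2 * \<P> u"
    using wp_eq_sigma[OF u(2)] u(2) by (simp add: field_simps)
  then have "ba_S u = 1 / ((inv_ba u)^2 * (\<P> u - a2))"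
    by (simp add: ba_S_def inv_ba_def algebra_simps power_mult_distrib)
  moreover have "ba_P u = inv_ba u * ((\<P>' u + a3) / (2 * (\<P> u - a2)))"
    using elim by (simp add: ba_P_def algebra_simps)
  ultimately show ?case
    using elim by simp
qed

lemma eventually_deriv_ba_S:
  "\<forall>\<^sub>F u in at 0. deriv ba_S u = -2 * a1 * ba_S u + a3 * (inv_ba u * inv_ba u * ba_S u * ba_S u)"
proof -
  have "\<forall>\<^sub>F u in at 0. ba_S u = 1 / ((inv_ba u)^2 * (\<P> u - a2))"
    using eventually_ba_near_0 by eventually_elim blast
  from eventually_deriv_cong_at[OF this] eventually_ba_near_0 show ?thesis
  proof eventually_elim
    case (elim u)
    then have u: "u \<in> ba_domain" "\<sigma> u \<noteq> 0" "\<P> u \<noteq> a2" "inv_ba u \<noteq> 0" by auto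
    have "(inv_ba has_field_derivative inv_ba u * (a1 - (\<P>' u + a3) / (2 * (\<P> u - a2)))) (at u)"
      using holomorphic_derivI[OF inv_ba_holomorphic open_ba_domain u(1)] elim by simp
    moreover have "((\<lambda>x. \<P> x - a2) has_field_derivative \<P>' u) (at u)"
      using has_field_derivative_wp[OF u(2)] by (auto intro!: derivative_eq_intros)
    ultimately have "deriv (\<lambda>x. 1 / ((inv_ba x)^2 * (\<P> x - a2))) u
        = - (2 * inv_ba u * (inv_ba u * (a1 - (\<P>' u + a3) / (2 * (\<P> u - a2)))) * (\<P> u - a2)
            + (inv_ba u)^2 * \<P>' u) / ((inv_ba u)^2 * (\<P> u - a2))^2"
      using u by (intro DERIV_imp_deriv has_field_derivative_inverse_square_mult) auto
    with elim show ?case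
      using S_derivative_algebra[of "\<P> u - a2" "inv_ba u" a1 "\<P>' u" a3] u by simp
  qed
qed

lemma eventually_deriv_ba_P:
  "\<forall>\<^sub>F u in at 0. deriv ba_P u = a1 * ba_P u - 2 * a3 * (inv_ba u * inv_ba u * ba_S u * ba_P u)
     - 3 * a2 * inv_ba u + (a4 - 6 * a2 * a2) * (inv_ba u * inv_ba u * inv_ba u * ba_S u)
     - 90 * (a6 - a3 * a3) * (ba_D 5 u * ba_S u * ba_S u)"
proof -
  have "\<forall>\<^sub>F u in at 0. ba_P u = inv_ba u * ((\<P>' u + a3) / (2 * (\<P> u - a2)))"
    using eventually_ba_near_0 by eventually_elim blast
  from eventually_deriv_cong_at[OF this] eventually_ba_near_0 eventually_wp'_nonzero show ?thesis
  proof eventually_elim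
    case (elim u)
    then have u: "u \<in> ba_domain" "\<sigma> u \<noteq> 0" "\<P> u \<noteq> a2" "inv_ba u \<noteq> 0" "\<P>' u \<noteq> 0"
      by auto
    have "(inv_ba has_field_derivative inv_ba u * (a1 - (\<P>' u + a3) / (2 * (\<P> u - a2)))) (at u)"
      using holomorphic_derivI[OF inv_ba_holomorphic open_ba_domain u(1)] elim by simp
    moreover have "((\<lambda>x. \<P>' x + a3) has_field_derivative 6 * (\<P> u)^2 - g2 / 2) (at u)"
      using has_field_derivative_wp'[OF u(2)] wp_second_deriv[OF u(2,5)] by (auto intro!: derivative_eq_intros)
    moreover have "((\<lambda>x. \<P> x - a2) has_field_derivative \<P>' u) (at u)"
      using has_field_derivative_wp[OF u(2)] by (auto intro!: derivative_eq_intros)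
    ultimately have "deriv (\<lambda>x. inv_ba x * ((\<P>' x + a3) / (2 * (\<P> x - a2)))) u
        = inv_ba u * (a1 - (\<P>' u + a3) / (2 * (\<P> u - a2))) * ((\<P>' u + a3) / (2 * (\<P> u - a2)))
          + ((6 * (\<P> u)^2 - g2 / 2) * (\<P> u - a2) - (\<P>' u + a3) * \<P>' u) / (2 * (\<P> u - a2)^2) * inv_ba u"
      using u by (intro DERIV_imp_deriv DERIV_mult has_field_derivative_div_double) auto
    moreover have "(\<P>' u)^2 = 4 * (\<P> u)^3 - g2 * \<P> u - (4 * a2^3 - g2 * a2 - a6)"
      using wp_curve[OF u(2)] by simp
    moreover have D5: "ba_D 5 u = (inv_ba u)^5 / 120"
      by (simp add: ba_D_def fact_numeral)
    ultimately show ?case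
      using elim P_derivative_algebra[of "\<P> u" a2 "inv_ba u" "\<P>' u" g2 a6 a1 a3] u by (simp add: D5)
  qed
qed

lemma BA_coeff_eq_higher_deriv: "BA_coeff \<sigma> \<mu>1 v w k = (deriv ^^ Suc k) inv_ba 0"
  unfolding BA_coeff_def Suc_eq_plus1
  by (rule higher_deriv_cong_ev[OF _ refl])
    (use open_ba_domain zero_in_ba_domain inv_gen_BA in \<open>auto simp: eventually_nhds\<close>)

end

section \<open>Integrality of the Taylor coefficients\<close>

type_synonym ba_instance = "complex \<times> complex \<times> (complex \<Rightarrow> complex) \<times> complex \<times> complex \<times> complex"

text \<open>Jets are taken uniformly over all admissible data \<open>(g\<^sub>2, g\<^sub>3, \<sigma>, \<mu>\<^sub>1, v, w)\<close>, so that a single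
  integral polynomial serves for all parameters.\<close>

definition ba_instances :: "ba_instance set" where
  "ba_instances = {(g2, g3, \<sigma>, \<mu>1, v, w). baker_akhiezer g2 g3 \<sigma> v}"

definition ba_a1 :: "ba_instance \<Rightarrow> complex" where
  "ba_a1 = (\<lambda>(g2, g3, \<sigma>, \<mu>1, v, w). \<mu>1 / 2)"

definition ba_a2 :: "ba_instance \<Rightarrow> complex" where
  "ba_a2 = (\<lambda>(g2, g3, \<sigma>, \<mu>1, v, w). wp \<sigma> v)"

definition ba_a3 :: "ba_instance \<Rightarrow> complex" where
  "ba_a3 = (\<lambda>(g2, g3, \<sigma>, \<mu>1, v, w). deriv (wp \<sigma>) w)"

definition ba_a4 :: "ba_instance \<Rightarrow> complex" where
  "ba_a4 = (\<lambda>(g2, g3, \<sigma>, \<mu>1, v, w). g2 / 2)"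

definition ba_a6 :: "ba_instance \<Rightarrow> complex" where
  "ba_a6 = (\<lambda>(g2, g3, \<sigma>, \<mu>1, v, w). 4 * (wp \<sigma> v)^3 - g2 * wp \<sigma> v - g3)"

abbreviation "ba_ring \<equiv> int_alg {ba_a1, ba_a2, ba_a3, ba_a4, ba_a6}"

datatype ba_coord = Coord_S | Coord_P | Coord_D nat

definition ba_coords :: "ba_instance \<Rightarrow> ba_coord \<Rightarrow> complex \<Rightarrow> complex" where
  "ba_coords = (\<lambda>(g2, g3, \<sigma>, \<mu>1, v, w) k. case k of
      Coord_S \<Rightarrow> baker_akhiezer.ba_S \<sigma> \<mu>1 v w
    | Coord_P \<Rightarrow> baker_akhiezer.ba_P \<sigma> \<mu>1 v w
    | Coord_D n \<Rightarrow> baker_akhiezer.ba_D \<sigma> \<mu>1 v w n)"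

definition ba_rhs :: "ba_instance \<Rightarrow> ba_coord \<Rightarrow> complex \<Rightarrow> complex" where
  "ba_rhs \<iota> k z =
    (let F = ba_coords \<iota> (Coord_D 1) z; S = ba_coords \<iota> Coord_S z; P = ba_coords \<iota> Coord_P z
     in case k of
       Coord_S \<Rightarrow> -2 * ba_a1 \<iota> * S + ba_a3 \<iota> * (F * F * S * S)
     | Coord_P \<Rightarrow> ba_a1 \<iota> * P - 2 * ba_a3 \<iota> * (F * F * S * P) - 3 * ba_a2 \<iota> * F
         + (ba_a4 \<iota> - 6 * ba_a2 \<iota> * ba_a2 \<iota>) * (F * F * F * S)
         - 90 * (ba_a6 \<iota> - ba_a3 \<iota> * ba_a3 \<iota>) * (ba_coords \<iota> (Coord_D 5) z * S * S)
     | Coord_D 0 \<Rightarrow> 0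
     | Coord_D (Suc n) \<Rightarrow> ba_coords \<iota> (Coord_D n) z * (ba_a1 \<iota> * F - P))"

lemma ba_coords_ode:
  assumes "\<iota> \<in> ba_instances"
  shows "\<forall>\<^sub>F z in at 0. deriv (ba_coords \<iota> k) z = ba_rhs \<iota> k z"
proof -
  obtain g2 g3 \<sigma> \<mu>1 v w where \<iota>: "\<iota> = (g2, g3, \<sigma>, \<mu>1, v, w)"
    by (cases \<iota>) auto
  interpret baker_akhiezer g2 g3 \<sigma> \<mu>1 v w
    using assms by (simp add: ba_instances_def \<iota>)
  have coords: "ba_coords \<iota> Coord_S = ba_S" "ba_coords \<iota> Coord_P = ba_P" "ba_coords \<iota> (Coord_D n) = ba_D n"
    for n by (simp_all add: \<iota> ba_coords_def)
  have coefficients: "ba_a1 \<iota> = a1" "ba_a2 \<iota> = a2" "ba_a3 \<iota> = a3" "ba_a4 \<iota> = a4" "ba_a6 \<iota> = a6"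
    by (simp_all add: \<iota> ba_a1_def ba_a2_def ba_a3_def ba_a4_def ba_a6_def)
  have rhs: "ba_rhs \<iota> Coord_S z = -2 * a1 * ba_S z + a3 * (inv_ba z * inv_ba z * ba_S z * ba_S z)"
    "ba_rhs \<iota> Coord_P z = a1 * ba_P z - 2 * a3 * (inv_ba z * inv_ba z * ba_S z * ba_P z)
       - 3 * a2 * inv_ba z + (a4 - 6 * a2 * a2) * (inv_ba z * inv_ba z * inv_ba z * ba_S z)
       - 90 * (a6 - a3 * a3) * (ba_D 5 z * ba_S z * ba_S z)"
    "ba_rhs \<iota> (Coord_D 0) z = 0"
    "ba_rhs \<iota> (Coord_D (Suc n)) z = ba_D n z * (a1 * inv_ba z - ba_P z)" for z n
    by (simp_all only: ba_rhs_def Let_def coords coefficients ba_D_1 ba_coord.case nat.case)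
  show ?thesis
  proof (cases k)
    case Coord_S
    show ?thesis
      using eventually_deriv_ba_S by (simp add: Coord_S coords rhs)
  next
    case Coord_P
    show ?thesis
      using eventually_deriv_ba_P by (simp add: Coord_P coords rhs)
  next
    case (Coord_D n)
    have "\<forall>\<^sub>F z in at 0. z \<in> ba_domain"
      using eventually_at_in_open[OF open_ba_domain zero_in_ba_domain] by eventually_elim simp
    then show ?thesis
    proof eventually_elim
      case (elim z)
      show ?case
      proof (cases n)
        case 0
        have "ba_D 0 = (\<lambda>_. 1)"
          by (simp add: ba_D_def[abs_def])
        then show ?thesis by (simp add: Coord_D 0 coords rhs)
      next
        case (Suc m)
        then show ?thesis
          using deriv_ba_D[OF elim] by (simp add: Coord_D coords rhs)
      qed
    qed
  qed
qed

lemma jets_ba_coords_initial: "jets_in ba_ring ba_instances 0 (\<lambda>\<iota>. ba_coords \<iota> k)"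
proof -
  define c :: int where "c = (case k of Coord_S \<Rightarrow> 1 | Coord_P \<Rightarrow> -1 | Coord_D n \<Rightarrow> if n = 0 then 1 else 0)"
  have "ba_coords \<iota> k analytic_on {0} \<and> ba_coords \<iota> k 0 = of_int c" if "\<iota> \<in> ba_instances" for \<iota>
  proof -
    obtain g2 g3 \<sigma> \<mu>1 v w where \<iota>: "\<iota> = (g2, g3, \<sigma>, \<mu>1, v, w)"
      by (cases \<iota>) auto
    interpret baker_akhiezer g2 g3 \<sigma> \<mu>1 v w
      using that by (simp add: ba_instances_def \<iota>)
    show ?thesis
      by (cases k) (simp_all add: \<iota> ba_coords_def c_def ba_S_analytic ba_P_analytic ba_D_analytic
          ba_S_0 ba_P_0 ba_D_0)
  qed
  then show ?thesis
    unfolding jets_in_def by (auto intro!: bexI[OF _ int_alg.of_int[of c]])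
qed

lemma jets_ba_rhs:
  assumes coords: "\<And>j. jets_in ba_ring ba_instances n (\<lambda>\<iota>. ba_coords \<iota> j)"
  shows "jets_in ba_ring ba_instances n (\<lambda>\<iota>. ba_rhs \<iota> k)"
proof -
  have generators: "ba_a1 \<in> ba_ring" "ba_a2 \<in> ba_ring" "ba_a3 \<in> ba_ring" "ba_a4 \<in> ba_ring" "ba_a6 \<in> ba_ring"
    by (simp_all add: int_alg.generator)
  note jets = jets_in_add jets_in_diff jets_in_mult jets_in_const coords
    int_alg.mult int_alg_diff int_alg_numeral int_alg_zero generators
  show ?thesis
  proof (cases k)
    case Coord_S
    show ?thesis
      unfolding Coord_S ba_rhs_def Let_def ba_coord.case by (intro jets)
  next
    case Coord_P
    show ?thesis
      unfolding Coord_P ba_rhs_def Let_def ba_coord.case by (intro jets)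
  next
    case (Coord_D m)
    show ?thesis
    proof (cases m)
      case 0
      show ?thesis
        unfolding Coord_D 0 ba_rhs_def Let_def ba_coord.case nat.case by (intro jets)
    next
      case (Suc j)
      show ?thesis
        unfolding Coord_D Suc ba_rhs_def Let_def ba_coord.case nat.case by (intro jets)
    qed
  qed
qed

lemma jets_ba_coords: "jets_in ba_ring ba_instances n (\<lambda>\<iota>. ba_coords \<iota> k)"
  by (rule jets_in_ode[OF jets_ba_coords_initial ba_coords_ode jets_ba_rhs])

lemma integral_Taylor_coefficients:
  "\<exists>S c. finite S \<and> (\<forall>\<iota>\<in>ba_instances. (deriv ^^ Suc k) (ba_coords \<iota> (Coord_D 1)) 0
     = zpoly5_eval S c (ba_a1 \<iota>) (ba_a2 \<iota>) (ba_a3 \<iota>) (ba_a4 \<iota>) (ba_a6 \<iota>))"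
proof -
  obtain p where "p \<in> ba_ring"
    and p: "\<And>\<iota>. \<iota> \<in> ba_instances \<Longrightarrow> (deriv ^^ Suc k) (ba_coords \<iota> (Coord_D 1)) 0 = p \<iota>"
    using jets_ba_coords[of "Suc k" "Coord_D 1"] unfolding jets_in_def by blast
  moreover obtain S c where "finite S"
    and "\<And>\<iota>. p \<iota> = zpoly5_eval S c (ba_a1 \<iota>) (ba_a2 \<iota>) (ba_a3 \<iota>) (ba_a4 \<iota>) (ba_a6 \<iota>)"
    using int_alg_zpoly5_eval[OF \<open>p \<in> ba_ring\<close>] by blast
  ultimately show ?thesis
    by auto
qed

lemma BA_coeff_zpoly5_eval:
  assumes S: "\<forall>\<iota>\<in>ba_instances. (deriv ^^ Suc k) (ba_coords \<iota> (Coord_D 1)) 0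
      = zpoly5_eval S c (ba_a1 \<iota>) (ba_a2 \<iota>) (ba_a3 \<iota>) (ba_a4 \<iota>) (ba_a6 \<iota>)"
    and "weierstrass_sigma (inv_g2 \<mu>1 \<mu>2 \<mu>3 \<mu>4) (inv_g3 \<mu>1 \<mu>2 \<mu>3 \<mu>4 \<mu>6) \<sigma>"
    and "\<sigma> v \<noteq> 0" and wp_v: "wp \<sigma> v = (4 * \<mu>2 + \<mu>1^2) / 12" and "deriv (wp \<sigma>) v \<noteq> 0"
  shows "BA_coeff \<sigma> \<mu>1 v w k = zpoly5_eval S c (\<mu>1 / 2) (wp \<sigma> v) (deriv (wp \<sigma>) w)
      (inv_g2 \<mu>1 \<mu>2 \<mu>3 \<mu>4 / 2) (4 * \<mu>6 + \<mu>3^2)"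
proof -
  define \<iota> where "\<iota> = (inv_g2 \<mu>1 \<mu>2 \<mu>3 \<mu>4, inv_g3 \<mu>1 \<mu>2 \<mu>3 \<mu>4 \<mu>6, \<sigma>, \<mu>1, v, w)"
  interpret baker_akhiezer "inv_g2 \<mu>1 \<mu>2 \<mu>3 \<mu>4" "inv_g3 \<mu>1 \<mu>2 \<mu>3 \<mu>4 \<mu>6" \<sigma> \<mu>1 v w
    using assms(2-) by unfold_locales auto
  have "\<iota> \<in> ba_instances"
    unfolding ba_instances_def \<iota>_def using baker_akhiezer_axioms by simp
  with S have "(deriv ^^ Suc k) (ba_coords \<iota> (Coord_D 1)) 0
      = zpoly5_eval S c (ba_a1 \<iota>) (ba_a2 \<iota>) (ba_a3 \<iota>) (ba_a4 \<iota>) (ba_a6 \<iota>)"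
    by blast
  moreover have "ba_a6 \<iota> = 4 * \<mu>6 + \<mu>3^2"
    using wp_v unfolding ba_a6_def \<iota>_def inv_g2_def inv_g3_def by (simp add: field_simps) algebra
  ultimately show ?thesis
    by (simp add: BA_coeff_eq_higher_deriv ba_coords_def ba_D_1 \<iota>_def
        ba_a1_def ba_a2_def ba_a3_def ba_a4_def)
qed

theorem mainTheorem18:
  shows "\<forall>k::nat. k \<ge> 1 \<longrightarrow>
    (\<exists>(S::(nat\<times>nat\<times>nat\<times>nat\<times>nat) set) (c::nat\<times>nat\<times>nat\<times>nat\<times>nat \<Rightarrow> int). finite S \<and>
      (\<forall>(\<mu>1::complex) \<mu>2 \<mu>3 \<mu>4 \<mu>6 (\<sigma>::complex \<Rightarrow> complex) v w.
         (inv_g2 \<mu>1 \<mu>2 \<mu>3 \<mu>4)^3 - 27 * (inv_g3 \<mu>1 \<mu>2 \<mu>3 \<mu>4 \<mu>6)^2 \<noteq> 0 \<and>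
         weierstrass_sigma (inv_g2 \<mu>1 \<mu>2 \<mu>3 \<mu>4) (inv_g3 \<mu>1 \<mu>2 \<mu>3 \<mu>4 \<mu>6) \<sigma> \<and>
         \<sigma> v \<noteq> 0 \<and> \<sigma> w \<noteq> 0 \<and>
         wp \<sigma> v = (4*\<mu>2 + \<mu>1^2) / 12 \<and>
         deriv (wp \<sigma>) w = - \<mu>3 \<and>
         deriv (wp \<sigma>) v \<noteq> 0
       \<longrightarrow> BA_coeff \<sigma> \<mu>1 v w k =
             zpoly5_eval S c (\<mu>1 / 2) (wp \<sigma> v) (deriv (wp \<sigma>) w)
               (inv_g2 \<mu>1 \<mu>2 \<mu>3 \<mu>4 / 2) (4*\<mu>6 + \<mu>3^2)))"
proof (intro allI impI, goal_cases)
  case (1 k)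
  obtain S c where "finite S" and S: "\<forall>\<iota>\<in>ba_instances. (deriv ^^ Suc k) (ba_coords \<iota> (Coord_D 1)) 0
      = zpoly5_eval S c (ba_a1 \<iota>) (ba_a2 \<iota>) (ba_a3 \<iota>) (ba_a4 \<iota>) (ba_a6 \<iota>)"
    using integral_Taylor_coefficients by blast
  show ?case
    by (intro exI[of _ S] exI[of _ c] conjI allI impI \<open>finite S\<close>)
      (elim conjE; rule BA_coeff_zpoly5_eval[OF S]; assumption)
qed

end
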